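(* Let $(\mathcal{C},\mathsf{I},\otimes,\lambda,\rho,\alpha)$ be a monoidal category with finite products, $\mathsf{T}=(T,\eta,\mu)$ a monoid in it, and $(\mathcal{E},\mathcal{M})$ an orthogonal factorization system on $\mathcal{C}$ such that: $\mathcal{E}$ is closed under $(-)\otimes S$ for every object $(S,s)$ of $\mathcal{M}/T$; the skew monoidal category $\mathcal{M}/\mathsf{T}=(\mathcal{M}/T,\mathsf{J},\boxdot)$ is monoidal; $\mathcal{E}$ contains all canonical morphisms $\langle\pi_i\otimes Y\rangle_i:(\prod_iX_i)\otimes Y\to\prod_i(X_i\otimes Y)$; and $\mathcal{E}$ is closed under finite products. Let $\phi:T^n\to T$ be an $n$-ary algebraic operation for $\mathsf{T}$ and $(R_1,r_1),\dots,(R_n,r_n)$ objects of $\mathcal{M}/T$. Factor $\phi\circ\prod_i r_i = r'\circ p$ with $p:\prod_iR_i\to R'$ in $\mathcal{E}$ and $r':R'\to T$ in $\mathcal{M}$. For each object $(S,s)$ of $\mathcal{M}/T$ let $\psi_S:\prod_i(R_i\boxdot S)\to R'\boxdot S$ be the unique morphism with $\psi_S\circ\prod_i q_{R_i,S}\circ\langle\pi_i\otimes S\rangle_i = q_{R',S}\circ(p\otimes S)$ and $(r'\boxdot s)\circ\psi_S = \phi\circ\prod_i(r_i\boxdot s)$. Then: (1) $\psi$ is an $(R_1,\dots,R_n;R')$-ary algebraic operation for the graded monoid $T_{\mathcal{M}}$, $\psi$ grades $\phi$, and every component $\psi_S$ is in $\mathcal{E}$. (2) For every object $(R'',r'')$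 of $\mathcal{M}/T$ and every $(R_1,\dots,R_n;R'')$-ary algebraic operation $\psi'$ for $T_{\mathcal{M}}$ that grades $\phi$, there is a unique morphism $f:(R',r')\to(R'',r'')$ in $\mathcal{M}/T$ such that $(f\boxdot S)\circ\psi_S=\psi'_S$ for all objects $S$ of $\mathcal{M}/T$.
   Context: Orthogonal factorization system $(\mathcal{E},\mathcal{M})$: both classes contain isomorphisms and are closed under composition; every commuting square $g e = m f$ with $e\in\mathcal{E}$, $m\in\mathcal{M}$ has a unique diagonal $d$ ($de=f$, $md=g$); every morphism factors as $m\circ e$. A monoid: $\eta:\mathsf{I}\to T$, $\mu:T\otimes T\to T$ with the usual unit and associativity laws. $\mathcal{M}/T$: objects $(S,s)$ with $s:S\to T$ in $\mathcal{M}$; morphisms $f:(S,s)\to(S',s')$ with $s'f=s$. Factor $\eta=j\circ q$ with $q:\mathsf{I}\to\mathsf{J}$ in $\mathcal{E}$, $j$ in $\mathcal{M}$; factor $\mu\circ(s\otimes s')=(s\boxdot s')\circ q_{S,S'}$ with $q_{S,S'}:S\otimes S'\to S\boxdot S'$ in $\mathcal{E}$, $s\boxdot s'$ in $\mathcal{M}$. This gives a skew monoidal structure $(\mathcal{M}/T,(\mathsf{J},j),\boxdot)$, denoted $\mathcal{M}/\mathsf{T}$, whose action on morphisms and structure maps are the unique diagonals compatible with the $q$'s and the structure maps of $\mathcal{C}$; in particular $f\boxdot f'$ is the unique morphism with $(f\boxdot f')q_{S_1,S_1'}=q_{S_2,S_2'}(f\otimes f')$ commuting with the maps to $T$, the right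 unitor is $r_S=q_{S,\mathsf{J}}\circ(S\otimes q)\circ\rho_S$, and the associator $a$ satisfies $a\,q_{S\boxdot S',S''}(q_{S,S'}\otimes S'')=q_{S,S'\boxdot S''}(S\otimes q_{S',S''})\alpha_{S,S',S''}$. The graded monoid (lax monoidal functor) $T_{\mathcal{M}}:\mathcal{M}/\mathsf{T}\to\mathcal{C}$ sends $(S,s)\mapsto S$ with unit $q$ and multiplication $q_{S,S'}$. An $n$-ary algebraic operation for $\mathsf{T}$ is $\phi:T^n\to T$ with $\phi\circ\mu^n\circ\langle\pi_i\otimes T\rangle_i=\mu\circ(\phi\otimes T)$. For a lax monoidal functor $(G,\eta^G,\mu^G):(\mathcal{G},I,\odot)\to\mathcal{C}$ from a monoidal category with associator $\alpha^{\mathcal{G}}$, a $(d_1,\dots,d_n;d')$-ary algebraic operation is a natural family $\psi_e:\prod_iG(d_i\odot e)\to G(d'\odot e)$ such that for all $e,e'$: $\psi_{e\odot e'}\circ\prod_iG(\alpha^{\mathcal{G}})\circ\prod_i\mu^G_{d_i\odot e,e'}\circ\langle\pi_i\otimes Ge'\rangle_i = G(\alpha^{\mathcal{G}})\circ\mu^G_{d'\odot e,e'}\circ(\psi_e\otimes Ge')$. For a grading with $\mathcal{M}$-components $g_d:Gd\to T$, $\psi$ grades $\phi$ if $g_{d'\odot e}\circ\psi_e=\phi\circ\prod_ig_{d_i\odot e}$ for all $e$; for $T_{\mathcal{M}}$, $g_{(S,s)}=s$. *)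

theory Defs
  imports Main
begin

text \<open>A category is encoded by a type of objects 'o and a type of arrows 'a
  (every element of 'a is an arrow), with domain, codomain, composition
  (Cmp C g f = g o f, meaningful when Cod f = Dom g) and identities.
  The monoidal structure: unit object Uo, tensor on objects TO and on arrows TA,
  left unitor Lu X : Uo (x) X -> X, right unitor Ru X : X -> X (x) Uo,
  associator As X Y Z : (X (x) Y) (x) Z -> X (x) (Y (x) Z).\<close>

record ('o, 'a) moncat =
  Dom :: "'a \<Rightarrow> 'o"
  Cod :: "'a \<Rightarrow> 'o"
  Cmp :: "'a \<Rightarrow> 'a \<Rightarrow> 'a"
  Ida :: "'o \<Rightarrow> 'a"
  Uo  :: "'o"
  TO  :: "'o \<Rightarrow> 'o \<Rightarrow> 'o"
  TA  :: "'a \<Rightarrow> 'a \<Rightarrow> 'a"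
  Lu  :: "'o \<Rightarrow> 'a"
  Ru  :: "'o \<Rightarrow> 'a"
  As  :: "'o \<Rightarrow> 'o \<Rightarrow> 'o \<Rightarrow> 'a"
  Prd :: "'o list \<Rightarrow> 'o"
  Prj :: "'o list \<Rightarrow> nat \<Rightarrow> 'a"

definition hom :: "('o, 'a) moncat \<Rightarrow> 'a \<Rightarrow> 'o \<Rightarrow> 'o \<Rightarrow> bool" where
  "hom C f X Y \<longleftrightarrow> Dom C f = X \<and> Cod C f = Y"

definition iso :: "('o, 'a) moncat \<Rightarrow> 'a \<Rightarrow> bool" where
  "iso C f \<longleftrightarrow> (\<exists>g. hom C g (Cod C f) (Dom C f)
      \<and> Cmp C g f = Ida C (Dom C f) \<and> Cmp C f g = Ida C (Cod C f))"

definition is_category :: "('o, 'a) moncat \<Rightarrow> bool" where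
  "is_category C \<longleftrightarrow>
     (\<forall>X. hom C (Ida C X) X X)
   \<and> (\<forall>f g. Cod C f = Dom C g \<longrightarrow> hom C (Cmp C g f) (Dom C f) (Cod C g))
   \<and> (\<forall>f. Cmp C (Ida C (Cod C f)) f = f \<and> Cmp C f (Ida C (Dom C f)) = f)
   \<and> (\<forall>f g h. Cod C f = Dom C g \<and> Cod C g = Dom C h \<longrightarrow>
          Cmp C h (Cmp C g f) = Cmp C (Cmp C h g) f)"

definition is_monoidal :: "('o, 'a) moncat \<Rightarrow> bool" where
  "is_monoidal C \<longleftrightarrow> is_category C
   \<comment> \<open>tensor is a bifunctor\<close>
   \<and> (\<forall>f g. hom C (TA C f g) (TO C (Dom C f) (Dom C g)) (TO C (Cod C f) (Cod C g)))
   \<and> (\<forall>X Y. TA C (Ida C X) (Ida C Y) = Ida C (TO C X Y))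
   \<and> (\<forall>f g f' g'. Cod C f = Dom C g \<and> Cod C f' = Dom C g' \<longrightarrow>
        TA C (Cmp C g f) (Cmp C g' f') = Cmp C (TA C g g') (TA C f f'))
   \<comment> \<open>unitors and associator: typed, invertible, natural\<close>
   \<and> (\<forall>X. hom C (Lu C X) (TO C (Uo C) X) X \<and> iso C (Lu C X))
   \<and> (\<forall>X. hom C (Ru C X) X (TO C X (Uo C)) \<and> iso C (Ru C X))
   \<and> (\<forall>X Y Z. hom C (As C X Y Z) (TO C (TO C X Y) Z) (TO C X (TO C Y Z))
              \<and> iso C (As C X Y Z))
   \<and> (\<forall>f. Cmp C f (Lu C (Dom C f)) = Cmp C (Lu C (Cod C f)) (TA C (Ida C (Uo C)) f))
   \<and> (\<forall>f. Cmp C (TA C f (Ida C (Uo C))) (Ru C (Dom C f)) = Cmp C (Ru C (Cod C f)) f)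
   \<and> (\<forall>f g h. Cmp C (TA C f (TA C g h)) (As C (Dom C f) (Dom C g) (Dom C h))
              = Cmp C (As C (Cod C f) (Cod C g) (Cod C h)) (TA C (TA C f g) h))
   \<comment> \<open>pentagon\<close>
   \<and> (\<forall>W X Y Z. Cmp C (As C W X (TO C Y Z)) (As C (TO C W X) Y Z)
        = Cmp C (TA C (Ida C W) (As C X Y Z))
            (Cmp C (As C W (TO C X Y) Z) (TA C (As C W X Y) (Ida C Z))))
   \<comment> \<open>triangle\<close>
   \<and> (\<forall>X Y. Cmp C (TA C (Ida C X) (Lu C Y)) (Cmp C (As C X (Uo C) Y) (TA C (Ru C X) (Ida C Y)))
        = Ida C (TO C X Y))"

definition has_finite_products :: "('o, 'a) moncat \<Rightarrow> bool" where
  "has_finite_products C \<longleftrightarrow>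
    (\<forall>Xs. (\<forall>i<length Xs. hom C (Prj C Xs i) (Prd C Xs) (Xs ! i))
      \<and> (\<forall>Y fs. length fs = length Xs \<and> (\<forall>i<length Xs. hom C (fs ! i) Y (Xs ! i)) \<longrightarrow>
            (\<exists>!h. hom C h Y (Prd C Xs) \<and> (\<forall>i<length Xs. Cmp C (Prj C Xs i) h = fs ! i))))"

definition tup :: "('o, 'a) moncat \<Rightarrow> 'o \<Rightarrow> 'a list \<Rightarrow> 'a" where
  "tup C Y fs = (THE h. hom C h Y (Prd C (map (Cod C) fs))
      \<and> (\<forall>i<length fs. Cmp C (Prj C (map (Cod C) fs) i) h = fs ! i))"

definition prodmap :: "('o, 'a) moncat \<Rightarrow> 'a list \<Rightarrow> 'a" where
  "prodmap C fs = tup C (Prd C (map (Dom C) fs))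
      (map (\<lambda>i. Cmp C (fs ! i) (Prj C (map (Dom C) fs) i)) [0..<length fs])"

definition canon :: "('o, 'a) moncat \<Rightarrow> 'o list \<Rightarrow> 'o \<Rightarrow> 'a" where
  "canon C Xs Y = tup C (TO C (Prd C Xs) Y)
      (map (\<lambda>i. TA C (Prj C Xs i) (Ida C Y)) [0..<length Xs])"

definition is_ofs :: "('o, 'a) moncat \<Rightarrow> 'a set \<Rightarrow> 'a set \<Rightarrow> bool" where
  "is_ofs C E M \<longleftrightarrow>
     (\<forall>f. iso C f \<longrightarrow> f \<in> E \<and> f \<in> M)
   \<and> (\<forall>f g. f \<in> E \<and> g \<in> E \<and> Cod C f = Dom C g \<longrightarrow> Cmp C g f \<in> E)
   \<and> (\<forall>f g. f \<in> M \<and> g \<in> M \<and> Cod C f = Dom C g \<longrightarrow> Cmp C g f \<in> M)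
   \<and> (\<forall>e m f g. e \<in> E \<and> m \<in> M \<and> Dom C f = Dom C e \<and> Cod C f = Dom C m
        \<and> Dom C g = Cod C e \<and> Cod C g = Cod C m \<and> Cmp C g e = Cmp C m f \<longrightarrow>
        (\<exists>!d. hom C d (Cod C e) (Dom C m) \<and> Cmp C d e = f \<and> Cmp C m d = g))
   \<and> (\<forall>f. \<exists>e m. e \<in> E \<and> m \<in> M \<and> Cod C e = Dom C m \<and> f = Cmp C m e)"

definition is_monoid :: "('o, 'a) moncat \<Rightarrow> 'o \<Rightarrow> 'a \<Rightarrow> 'a \<Rightarrow> bool" where
  "is_monoid C T \<eta> \<mu> \<longleftrightarrow>
     hom C \<eta> (Uo C) T \<and> hom C \<mu> (TO C T T) T
   \<and> Cmp C \<mu> (TA C \<eta> (Ida C T)) = Lu C T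
   \<and> Cmp C \<mu> (Cmp C (TA C (Ida C T) \<eta>) (Ru C T)) = Ida C T
   \<and> Cmp C \<mu> (TA C \<mu> (Ida C T)) = Cmp C \<mu> (Cmp C (TA C (Ida C T) \<mu>) (As C T T T))"

definition is_alg_op :: "('o, 'a) moncat \<Rightarrow> 'o \<Rightarrow> 'a \<Rightarrow> nat \<Rightarrow> 'a \<Rightarrow> bool" where
  "is_alg_op C T \<mu> n \<phi> \<longleftrightarrow>
     hom C \<phi> (Prd C (replicate n T)) T
   \<and> Cmp C \<phi> (Cmp C (prodmap C (replicate n \<mu>)) (canon C (replicate n T) T))
       = Cmp C \<mu> (TA C \<phi> (Ida C T))"

text \<open>An object (S, s) of M/T is represented by the arrow s itself (S = Dom s).\<close>
definition sobj :: "('o, 'a) moncat \<Rightarrow> 'a set \<Rightarrow> 'o \<Rightarrow> 'a \<Rightarrow> bool" where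
  "sobj C M T s \<longleftrightarrow> s \<in> M \<and> Cod C s = T"

definition smor :: "('o, 'a) moncat \<Rightarrow> 'a \<Rightarrow> 'a \<Rightarrow> 'a \<Rightarrow> bool" where
  "smor C f s s' \<longleftrightarrow> hom C f (Dom C s) (Dom C s') \<and> Cmp C s' f = s"

text \<open>Chosen (E,M)-factorizations: eta = j o q0 and
  mu o (s (x) s') = (bx s s') o (qq s s') for all objects s, s' of M/T;
  here bx s s' is the object s boxdot s' and qq s s' = q_{S,S'}.\<close>
definition fact_data :: "('o, 'a) moncat \<Rightarrow> 'a set \<Rightarrow> 'a set \<Rightarrow> 'o \<Rightarrow> 'a \<Rightarrow> 'a \<Rightarrow>
    'a \<Rightarrow> 'a \<Rightarrow> ('a \<Rightarrow> 'a \<Rightarrow> 'a) \<Rightarrow> ('a \<Rightarrow> 'a \<Rightarrow> 'a) \<Rightarrow> bool" where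
  "fact_data C E M T \<eta> \<mu> j q0 bx qq \<longleftrightarrow>
     q0 \<in> E \<and> j \<in> M \<and> hom C q0 (Uo C) (Dom C j) \<and> Cod C j = T \<and> \<eta> = Cmp C j q0
   \<and> (\<forall>s s'. sobj C M T s \<and> sobj C M T s' \<longrightarrow>
        qq s s' \<in> E \<and> bx s s' \<in> M
      \<and> hom C (qq s s') (TO C (Dom C s) (Dom C s')) (Dom C (bx s s'))
      \<and> Cod C (bx s s') = T
      \<and> Cmp C \<mu> (TA C s s') = Cmp C (bx s s') (qq s s'))"

definition boxmap :: "('o, 'a) moncat \<Rightarrow> ('a \<Rightarrow> 'a \<Rightarrow> 'a) \<Rightarrow> ('a \<Rightarrow> 'a \<Rightarrow> 'a) \<Rightarrow>
    'a \<Rightarrow> 'a \<Rightarrow> 'a \<Rightarrow> 'a \<Rightarrow> 'a \<Rightarrow> 'a \<Rightarrow> 'a" where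
  "boxmap C bx qq s1 s1' s2 s2' f g = (THE d.
      hom C d (Dom C (bx s1 s1')) (Dom C (bx s2 s2'))
    \<and> Cmp C d (qq s1 s1') = Cmp C (qq s2 s2') (TA C f g)
    \<and> Cmp C (bx s2 s2') d = bx s1 s1')"

text \<open>Left unitor J boxdot S -> S, right unitor S -> S boxdot J and
  associator (S boxdot S') boxdot S'' -> S boxdot (S' boxdot S'') of M/T.\<close>
definition slu :: "('o, 'a) moncat \<Rightarrow> 'a \<Rightarrow> 'a \<Rightarrow> ('a \<Rightarrow> 'a \<Rightarrow> 'a) \<Rightarrow> ('a \<Rightarrow> 'a \<Rightarrow> 'a) \<Rightarrow>
    'a \<Rightarrow> 'a" where
  "slu C j q0 bx qq s = (THE d. hom C d (Dom C (bx j s)) (Dom C s)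
      \<and> Cmp C d (Cmp C (qq j s) (TA C q0 (Ida C (Dom C s)))) = Lu C (Dom C s)
      \<and> Cmp C s d = bx j s)"

definition sru :: "('o, 'a) moncat \<Rightarrow> 'a \<Rightarrow> 'a \<Rightarrow> ('a \<Rightarrow> 'a \<Rightarrow> 'a) \<Rightarrow> ('a \<Rightarrow> 'a \<Rightarrow> 'a) \<Rightarrow>
    'a \<Rightarrow> 'a" where
  "sru C j q0 bx qq s =
     Cmp C (qq s j) (Cmp C (TA C (Ida C (Dom C s)) q0) (Ru C (Dom C s)))"

definition sas :: "('o, 'a) moncat \<Rightarrow> ('a \<Rightarrow> 'a \<Rightarrow> 'a) \<Rightarrow> ('a \<Rightarrow> 'a \<Rightarrow> 'a) \<Rightarrow>
    'a \<Rightarrow> 'a \<Rightarrow> 'a \<Rightarrow> 'a" where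
  "sas C bx qq s s' s'' = (THE d.
      hom C d (Dom C (bx (bx s s') s'')) (Dom C (bx s (bx s' s'')))
    \<and> Cmp C d (Cmp C (qq (bx s s') s'') (TA C (qq s s') (Ida C (Dom C s''))))
        = Cmp C (qq s (bx s' s'')) (Cmp C (TA C (Ida C (Dom C s)) (qq s' s''))
                                      (As C (Dom C s) (Dom C s') (Dom C s'')))
    \<and> Cmp C (bx s (bx s' s'')) d = bx (bx s s') s'')"

definition slice_monoidal :: "('o, 'a) moncat \<Rightarrow> 'a set \<Rightarrow> 'o \<Rightarrow> 'a \<Rightarrow> 'a \<Rightarrow>
    ('a \<Rightarrow> 'a \<Rightarrow> 'a) \<Rightarrow> ('a \<Rightarrow> 'a \<Rightarrow> 'a) \<Rightarrow> bool" where
  "slice_monoidal C M T j q0 bx qq \<longleftrightarrow>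
     (\<forall>s. sobj C M T s \<longrightarrow> iso C (slu C j q0 bx qq s) \<and> iso C (sru C j q0 bx qq s))
   \<and> (\<forall>s s' s''. sobj C M T s \<and> sobj C M T s' \<and> sobj C M T s'' \<longrightarrow>
        iso C (sas C bx qq s s' s''))"

text \<open>A (R_1,...,R_n; R')-ary algebraic operation for the lax monoidal functor
  T_M : M/T -> C (which sends (S,s) to S, morphisms to themselves, with
  multiplication q_{S,S'}), written out for this functor.
  rs = [r_1,...,r_n], r' are objects of M/T, psi is indexed by objects s of M/T.\<close>
definition alg_op_TM :: "('o, 'a) moncat \<Rightarrow> 'a set \<Rightarrow> 'o \<Rightarrow>
    ('a \<Rightarrow> 'a \<Rightarrow> 'a) \<Rightarrow> ('a \<Rightarrow> 'a \<Rightarrow> 'a) \<Rightarrow> 'a list \<Rightarrow> 'a \<Rightarrow> ('a \<Rightarrow> 'a) \<Rightarrow> bool" where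
  "alg_op_TM C M T bx qq rs r' \<psi> \<longleftrightarrow>
     \<comment> \<open>typing\<close>
     (\<forall>s. sobj C M T s \<longrightarrow>
        hom C (\<psi> s) (Prd C (map (\<lambda>r. Dom C (bx r s)) rs)) (Dom C (bx r' s)))
     \<comment> \<open>naturality in s\<close>
   \<and> (\<forall>s1 s2 f. sobj C M T s1 \<and> sobj C M T s2 \<and> smor C f s1 s2 \<longrightarrow>
        Cmp C (\<psi> s2) (prodmap C (map (\<lambda>r. boxmap C bx qq r s1 r s2 (Ida C (Dom C r)) f) rs))
      = Cmp C (boxmap C bx qq r' s1 r' s2 (Ida C (Dom C r')) f) (\<psi> s1))
     \<comment> \<open>compatibility with the multiplication\<close>
   \<and> (\<forall>s s'. sobj C M T s \<and> sobj C M T s' \<longrightarrow>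
        Cmp C (\<psi> (bx s s'))
          (Cmp C (prodmap C (map (\<lambda>r. sas C bx qq r s s') rs))
            (Cmp C (prodmap C (map (\<lambda>r. qq (bx r s) s') rs))
              (canon C (map (\<lambda>r. Dom C (bx r s)) rs) (Dom C s'))))
      = Cmp C (sas C bx qq r' s s') (Cmp C (qq (bx r' s) s') (TA C (\<psi> s) (Ida C (Dom C s')))))"

text \<open>psi grades phi (the M-components of T_M are g_{(S,s)} = s).\<close>
definition grades_TM :: "('o, 'a) moncat \<Rightarrow> 'a set \<Rightarrow> 'o \<Rightarrow> ('a \<Rightarrow> 'a \<Rightarrow> 'a) \<Rightarrow>
    'a list \<Rightarrow> 'a \<Rightarrow> ('a \<Rightarrow> 'a) \<Rightarrow> 'a \<Rightarrow> bool" where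
  "grades_TM C M T bx rs r' \<psi> \<phi> \<longleftrightarrow>
     (\<forall>s. sobj C M T s \<longrightarrow>
        Cmp C (bx r' s) (\<psi> s) = Cmp C \<phi> (prodmap C (map (\<lambda>r. bx r s) rs)))"

definition psi_char :: "('o, 'a) moncat \<Rightarrow> ('a \<Rightarrow> 'a \<Rightarrow> 'a) \<Rightarrow> ('a \<Rightarrow> 'a \<Rightarrow> 'a) \<Rightarrow>
    'a list \<Rightarrow> 'a \<Rightarrow> 'a \<Rightarrow> 'a \<Rightarrow> 'a \<Rightarrow> 'a \<Rightarrow> bool" where
  "psi_char C bx qq rs r' p \<phi> s x \<longleftrightarrow>
     hom C x (Prd C (map (\<lambda>r. Dom C (bx r s)) rs)) (Dom C (bx r' s))
   \<and> Cmp C x (Cmp C (prodmap C (map (\<lambda>r. qq r s) rs)) (canon C (map (Dom C) rs) (Dom C s)))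
       = Cmp C (qq r' s) (TA C p (Ida C (Dom C s)))
   \<and> Cmp C (bx r' s) x = Cmp C \<phi> (prodmap C (map (\<lambda>r. bx r s) rs))"

end

theory Submission
  imports Defs
begin

text \<open>Every map in the statement is a diagonal filler for the factorization system.
  Put \<open>e\<^sub>S = \<Prod>\<^sub>i q\<^bsub>R\<^sub>i,S\<^esub> \<circ> \<langle>\<pi>\<^sub>i \<otimes> S\<rangle>\<^sub>i\<close>. Since \<open>\<phi>\<close> is algebraic, the square formed by \<open>e\<^sub>S\<close>,
  \<open>q\<^bsub>R',S\<^esub> \<circ> (p \<otimes> S)\<close>, \<open>\<phi> \<circ> \<Prod>\<^sub>i (r\<^sub>i \<odot> s)\<close> and \<open>r' \<odot> s\<close> commutes, and \<open>\<psi>\<^sub>S\<close> is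
  its unique diagonal. It lies in \<open>E\<close> because \<open>\<psi>\<^sub>S \<circ> e\<^sub>S\<close> does. Naturality and
  compatibility with the multiplication are equations between maps out of an \<open>E\<close>-map
  into an \<open>M\<close>-map, so they follow from uniqueness of diagonals.

  For universality, transport the unit component \<open>\<psi>'\<^sub>J\<close> along the right unitors.
  This gives \<open>g : \<Prod>\<^sub>i R\<^sub>i \<rightarrow> R''\<close> with \<open>r'' \<circ> g = r' \<circ> p\<close>, and \<open>f\<close> is the
  diagonal of \<open>p\<close> against \<open>r''\<close>. The multiplicativity of \<open>\<psi>'\<close> at \<open>(J, S)\<close>, together
  with the triangle axiom of \<open>M/T\<close>, determines \<open>\<psi>'\<^sub>S\<close> on \<open>e\<^sub>S\<close> by \<open>g\<close> alone.
  Hence \<open>\<psi>'\<^sub>S = (f \<odot> S) \<circ> \<psi>\<^sub>S\<close>, and \<open>f\<close> is unique because of the component at \<open>J\<close>.\<close>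

section \<open>Categories\<close>

locale category =
  fixes C :: "('o, 'a) moncat"
  assumes category_laws: "is_category C"
begin

abbreviation cmp (infixr "\<cdot>" 55) where "g \<cdot> f \<equiv> Cmp C g f"
abbreviation ida where "ida X \<equiv> Ida C X"
abbreviation dm where "dm f \<equiv> Dom C f"
abbreviation cd where "cd f \<equiv> Cod C f"

lemma dom_id[simp]: "dm (ida X) = X" and cod_id[simp]: "cd (ida X) = X"
  using category_laws unfolding is_category_def hom_def by auto

lemma dom_comp[simp]: "cd f = dm g \<Longrightarrow> dm (g \<cdot> f) = dm f"
  and cod_comp[simp]: "cd f = dm g \<Longrightarrow> cd (g \<cdot> f) = cd g"
  using category_laws unfolding is_category_def hom_def by auto

lemma comp_id_left[simp]: "cd f = X \<Longrightarrow> ida X \<cdot> f = f"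
  and comp_id_right[simp]: "dm f = X \<Longrightarrow> f \<cdot> ida X = f"
  using category_laws unfolding is_category_def by auto

lemma comp_assoc[simp]: "cd f = dm g \<Longrightarrow> cd g = dm h \<Longrightarrow> (h \<cdot> g) \<cdot> f = h \<cdot> (g \<cdot> f)"
  using category_laws unfolding is_category_def by metis

lemma comp_reassoc: "a \<cdot> b = c \<Longrightarrow> cd b = dm a \<Longrightarrow> cd k = dm b \<Longrightarrow> a \<cdot> (b \<cdot> k) = c \<cdot> k"
  by (metis comp_assoc)

lemma isoE:
  assumes "iso C f"
  obtains g where "dm g = cd f" "cd g = dm f" "g \<cdot> f = ida (dm f)" "f \<cdot> g = ida (cd f)"
  using assms unfolding iso_def hom_def by auto

lemma iso_cancel_left:
  assumes "iso C h" "cd a = dm h" "cd b = dm h" "h \<cdot> a = h \<cdot> b"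
  shows "a = b"
proof -
  obtain g where g: "dm g = cd h" "cd g = dm h" "g \<cdot> h = ida (dm h)"
    using assms(1) by (rule isoE)
  have "a = (g \<cdot> h) \<cdot> a" using g(3) assms(2) by simp
  also have "\<dots> = g \<cdot> (h \<cdot> a)" by (rule comp_assoc) (use g assms(2) in simp_all)
  also have "\<dots> = g \<cdot> (h \<cdot> b)" using assms(4) by simp
  also have "\<dots> = (g \<cdot> h) \<cdot> b" by (rule comp_assoc[symmetric]) (use g assms(3) in simp_all)
  also have "\<dots> = b" using g(3) assms(3) by simp
  finally show ?thesis .
qed

end

section \<open>Orthogonal factorization systems\<close>

locale ofs_category = category C for C :: "('o, 'a) moncat" +
  fixes E M :: "'a set"
  assumes ofs: "is_ofs C E M"
begin

lemma iso_in_E: "iso C f \<Longrightarrow> f \<in> E"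
  using ofs unfolding is_ofs_def by auto

lemma E_comp: "f \<in> E \<Longrightarrow> g \<in> E \<Longrightarrow> cd f = dm g \<Longrightarrow> g \<cdot> f \<in> E"
  using ofs unfolding is_ofs_def by auto

lemma factorization: "\<exists>e m. e \<in> E \<and> m \<in> M \<and> cd e = dm m \<and> f = m \<cdot> e"
  using ofs unfolding is_ofs_def by auto

lemma diagonal_ex1:
  assumes "e \<in> E" "m \<in> M" "dm f = dm e" "cd f = dm m" "dm g = cd e" "cd g = cd m" "g \<cdot> e = m \<cdot> f"
  shows "\<exists>!d. dm d = cd e \<and> cd d = dm m \<and> d \<cdot> e = f \<and> m \<cdot> d = g"
  using ofs assms unfolding is_ofs_def hom_def by blast

lemma diagonal_unique:
  assumes "e \<in> E" "m \<in> M" "dm d1 = cd e" "cd d1 = dm m" "dm d2 = cd e" "cd d2 = dm m"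
    "d1 \<cdot> e = d2 \<cdot> e" "m \<cdot> d1 = m \<cdot> d2"
  shows "d1 = d2"
proof -
  have "\<exists>!d. dm d = cd e \<and> cd d = dm m \<and> d \<cdot> e = d1 \<cdot> e \<and> m \<cdot> d = m \<cdot> d1"
    by (rule diagonal_ex1) (use assms in auto)
  then show ?thesis using assms by metis
qed

lemma the_diagonal:
  assumes "e \<in> E" "m \<in> M" "dm f = dm e" "cd f = dm m" "dm g = X" "cd g = cd m" "g \<cdot> e = m \<cdot> f"
    "cd e = X" "dm m = Y"
  shows "hom C (THE d. hom C d X Y \<and> d \<cdot> e = f \<and> m \<cdot> d = g) X Y
    \<and> (THE d. hom C d X Y \<and> d \<cdot> e = f \<and> m \<cdot> d = g) \<cdot> e = f
    \<and> m \<cdot> (THE d. hom C d X Y \<and> d \<cdot> e = f \<and> m \<cdot> d = g) = g"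
proof (rule theI')
  show "\<exists>!d. hom C d X Y \<and> d \<cdot> e = f \<and> m \<cdot> d = g"
    using diagonal_ex1[OF assms(1-4)] assms(5-9) unfolding hom_def by (simp add: conj_assoc)
qed

text \<open>Factor \<open>g = m' \<cdot> e'\<close>; the diagonal of the square \<open>e' \<cdot> e\<close>, \<open>id\<close> against
  \<open>g \<cdot> e\<close>, \<open>m'\<close> is an inverse of \<open>m'\<close>, so \<open>m'\<close> is an isomorphism.\<close>
lemma E_cancel_right:
  assumes e: "e \<in> E" and t: "dm g = cd e" and ge: "g \<cdot> e \<in> E"
  shows "g \<in> E"
proof -
  obtain e' m' where e'E: "e' \<in> E" and m'M: "m' \<in> M" and em: "cd e' = dm m'"
    and g_eq: "g = m' \<cdot> e'"
    using factorization by blast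
  have de': "dm e' = dm g" "cd m' = cd g" unfolding g_eq using em by simp_all
  have "\<exists>!d. dm d = cd (g \<cdot> e) \<and> cd d = dm m' \<and> d \<cdot> (g \<cdot> e) = e' \<cdot> e \<and> m' \<cdot> d = ida (cd g)"
  proof (rule diagonal_ex1[OF ge m'M])
    have "ida (cd g) \<cdot> (g \<cdot> e) = g \<cdot> e" using t by simp
    also have "\<dots> = m' \<cdot> (e' \<cdot> e)" unfolding g_eq using em t de' by simp
    finally show "ida (cd g) \<cdot> (g \<cdot> e) = m' \<cdot> (e' \<cdot> e)" .
  qed (use t de' em in simp_all)
  then obtain d where d: "dm d = cd g" "cd d = dm m'" "d \<cdot> (g \<cdot> e) = e' \<cdot> e" "m' \<cdot> d = ida (cd g)"
    using t by auto
  have dg: "d \<cdot> g = e'"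
  proof (rule diagonal_unique[OF e m'M])
    show "(d \<cdot> g) \<cdot> e = e' \<cdot> e" using d(1,3) t by simp
    have "m' \<cdot> (d \<cdot> g) = (m' \<cdot> d) \<cdot> g" using d(1,2) de' by simp
    also have "\<dots> = g" using d(4) by simp
    finally show "m' \<cdot> (d \<cdot> g) = m' \<cdot> e'" using g_eq by simp
  qed (use d(1,2) t de' em in simp_all)
  have dm': "d \<cdot> m' = ida (dm m')"
  proof (rule diagonal_unique[OF e'E m'M])
    have "(d \<cdot> m') \<cdot> e' = d \<cdot> (m' \<cdot> e')" using d(1,2) de' em by simp
    also have "\<dots> = d \<cdot> g" using g_eq by simp
    finally show "(d \<cdot> m') \<cdot> e' = ida (dm m') \<cdot> e'" using dg em by simp
    have "m' \<cdot> (d \<cdot> m') = (m' \<cdot> d) \<cdot> m'" using d(1,2) de' by simp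
    also have "\<dots> = m'" using d(4) de' by simp
    finally show "m' \<cdot> (d \<cdot> m') = m' \<cdot> ida (dm m')" by simp
  qed (use d(1,2) de' em in simp_all)
  have "iso C m'" unfolding iso_def hom_def using d(1,2,4) dm' de' by (intro exI[of _ d]) simp
  then have "m' \<in> E" by (rule iso_in_E)
  then show ?thesis using e'E em g_eq E_comp by simp
qed

end

section \<open>Monoidal categories with finite products\<close>

locale monoidal_products =
  fixes C :: "('o, 'a) moncat"
  assumes monoidal: "is_monoidal C"
    and products: "has_finite_products C"
begin

sublocale category C
  using monoidal unfolding is_monoidal_def by unfold_locales simp

abbreviation tensor (infix "\<otimes>" 65) where "f \<otimes> g \<equiv> TA C f g"

lemma dom_tensor[simp]: "dm (f \<otimes> g) = TO C (dm f) (dm g)"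
  and cod_tensor[simp]: "cd (f \<otimes> g) = TO C (cd f) (cd g)"
  using monoidal unfolding is_monoidal_def hom_def by auto

lemma tensor_id[simp]: "ida X \<otimes> ida Y = ida (TO C X Y)"
  using monoidal unfolding is_monoidal_def by auto

lemma tensor_comp:
  "cd f = dm g \<Longrightarrow> cd f' = dm g' \<Longrightarrow> (g \<otimes> g') \<cdot> (f \<otimes> f') = (g \<cdot> f) \<otimes> (g' \<cdot> f')"
  using monoidal unfolding is_monoidal_def by metis

lemma tensor_comp_assoc: "cd f = dm g \<Longrightarrow> cd f' = dm g' \<Longrightarrow> cd k = TO C (dm f) (dm f') \<Longrightarrow>
   (g \<otimes> g') \<cdot> ((f \<otimes> f') \<cdot> k) = ((g \<cdot> f) \<otimes> (g' \<cdot> f')) \<cdot> k"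
  by (simp flip: tensor_comp)

lemma lu_typing[simp]: "dm (Lu C X) = TO C (Uo C) X" "cd (Lu C X) = X"
  and ru_typing[simp]: "dm (Ru C X) = X" "cd (Ru C X) = TO C X (Uo C)"
  and as_typing[simp]: "dm (As C X Y Z) = TO C (TO C X Y) Z" "cd (As C X Y Z) = TO C X (TO C Y Z)"
  using monoidal unfolding is_monoidal_def hom_def by auto

lemma lu_nat: "f \<cdot> Lu C (dm f) = Lu C (cd f) \<cdot> (ida (Uo C) \<otimes> f)"
  and ru_nat: "(f \<otimes> ida (Uo C)) \<cdot> Ru C (dm f) = Ru C (cd f) \<cdot> f"
  and as_nat: "(f \<otimes> (g \<otimes> h)) \<cdot> As C (dm f) (dm g) (dm h) = As C (cd f) (cd g) (cd h) \<cdot> ((f \<otimes> g) \<otimes> h)"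
  and triangle: "(ida X \<otimes> Lu C Y) \<cdot> (As C X (Uo C) Y \<cdot> (Ru C X \<otimes> ida Y)) = ida (TO C X Y)"
  using monoidal unfolding is_monoidal_def by auto

lemma ru_nat_sym: "X = cd f \<Longrightarrow> Ru C X \<cdot> f = (f \<otimes> ida (Uo C)) \<cdot> Ru C (dm f)"
  using ru_nat[of f] by simp

lemma as_nat_sym: "X = cd f \<Longrightarrow> Y = cd g \<Longrightarrow> Z = cd h \<Longrightarrow>
   As C X Y Z \<cdot> ((f \<otimes> g) \<otimes> h) = (f \<otimes> (g \<otimes> h)) \<cdot> As C (dm f) (dm g) (dm h)"
  using as_nat[of f g h] by simp

lemma as_nat_comp: "X = cd f \<Longrightarrow> Y = cd g \<Longrightarrow> Z = cd h \<Longrightarrow> cd k = TO C (TO C (dm f) (dm g)) (dm h) \<Longrightarrow>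
   As C X Y Z \<cdot> (((f \<otimes> g) \<otimes> h) \<cdot> k) = (f \<otimes> (g \<otimes> h)) \<cdot> (As C (dm f) (dm g) (dm h) \<cdot> k)"
  using as_nat[of f g h] by (simp flip: comp_assoc)

lemma as_nat_middle:
  assumes "cd w = TO C X (dm h)"
  shows "As C X (cd h) Z \<cdot> (((ida X \<otimes> h) \<cdot> w) \<otimes> ida Z)
    = (ida X \<otimes> (h \<otimes> ida Z)) \<cdot> (As C X (dm h) Z \<cdot> (w \<otimes> ida Z))"
proof -
  have "((ida X \<otimes> h) \<cdot> w) \<otimes> ida Z = ((ida X \<otimes> h) \<otimes> ida Z) \<cdot> (w \<otimes> ida Z)"
    using assms by (simp add: tensor_comp)
  then have "As C X (cd h) Z \<cdot> (((ida X \<otimes> h) \<cdot> w) \<otimes> ida Z)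
      = (As C X (cd h) Z \<cdot> ((ida X \<otimes> h) \<otimes> ida Z)) \<cdot> (w \<otimes> ida Z)"
    using assms by (simp del: tensor_id)
  also have "\<dots> = ((ida X \<otimes> (h \<otimes> ida Z)) \<cdot> As C X (dm h) Z) \<cdot> (w \<otimes> ida Z)"
    using as_nat_sym[of X "ida X" "cd h" h Z "ida Z"] by simp
  also have "\<dots> = (ida X \<otimes> (h \<otimes> ida Z)) \<cdot> (As C X (dm h) Z \<cdot> (w \<otimes> ida Z))"
    using assms by (simp del: tensor_id)
  finally show ?thesis .
qed

lemma triangle_comp:
  assumes "cd x = X"
  shows "(ida X \<otimes> Lu C Y) \<cdot> (As C X (Uo C) Y \<cdot> ((Ru C X \<cdot> x) \<otimes> ida Y)) = x \<otimes> ida Y"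
proof -
  have "(Ru C X \<cdot> x) \<otimes> ida Y = (Ru C X \<otimes> ida Y) \<cdot> (x \<otimes> ida Y)" using assms by (simp add: tensor_comp)
  then have "(ida X \<otimes> Lu C Y) \<cdot> (As C X (Uo C) Y \<cdot> ((Ru C X \<cdot> x) \<otimes> ida Y))
      = ((ida X \<otimes> Lu C Y) \<cdot> (As C X (Uo C) Y \<cdot> (Ru C X \<otimes> ida Y))) \<cdot> (x \<otimes> ida Y)"
    using assms by (simp del: tensor_id)
  also have "\<dots> = x \<otimes> ida Y" unfolding triangle using assms by simp
  finally show ?thesis .
qed

lemma prj_typing[simp]: "i < length Xs \<Longrightarrow> dm (Prj C Xs i) = Prd C Xs"
  "i < length Xs \<Longrightarrow> cd (Prj C Xs i) = Xs ! i"
  using products unfolding has_finite_products_def hom_def by auto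

lemma prod_arrow_eqI:
  assumes "\<And>i. i < length Xs \<Longrightarrow> Prj C Xs i \<cdot> h1 = Prj C Xs i \<cdot> h2"
    "dm h1 = Y" "cd h1 = Prd C Xs" "dm h2 = Y" "cd h2 = Prd C Xs"
  shows "h1 = h2"
proof -
  let ?fs = "map (\<lambda>i. Prj C Xs i \<cdot> h1) [0..<length Xs]"
  have "length ?fs = length Xs \<and> (\<forall>i<length Xs. hom C (?fs ! i) Y (Xs ! i))"
    using assms by (auto simp: hom_def)
  then have "\<exists>!h. hom C h Y (Prd C Xs) \<and> (\<forall>i<length Xs. Prj C Xs i \<cdot> h = ?fs ! i)"
    using products unfolding has_finite_products_def by blast
  then show ?thesis using assms unfolding hom_def by auto
qed

lemma tup:
  assumes "\<And>i. i < length fs \<Longrightarrow> dm (fs ! i) = Y"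
  shows "dm (tup C Y fs) = Y" "cd (tup C Y fs) = Prd C (map cd fs)"
    "\<And>i. i < length fs \<Longrightarrow> Prj C (map cd fs) i \<cdot> tup C Y fs = fs ! i"
proof -
  have "length fs = length (map cd fs) \<and> (\<forall>i<length (map cd fs). hom C (fs ! i) Y (map cd fs ! i))"
    using assms by (auto simp: hom_def)
  then have "\<exists>!h. hom C h Y (Prd C (map cd fs)) \<and> (\<forall>i<length fs. Prj C (map cd fs) i \<cdot> h = fs ! i)"
    using products unfolding has_finite_products_def by (metis length_map)
  then have "hom C (tup C Y fs) Y (Prd C (map cd fs))
      \<and> (\<forall>i<length fs. Prj C (map cd fs) i \<cdot> tup C Y fs = fs ! i)"
    unfolding tup_def by (rule theI')
  then show "dm (tup C Y fs) = Y" "cd (tup C Y fs) = Prd C (map cd fs)"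
    "\<And>i. i < length fs \<Longrightarrow> Prj C (map cd fs) i \<cdot> tup C Y fs = fs ! i"
    unfolding hom_def by auto
qed

lemma dom_prodmap[simp]: "dm (prodmap C fs) = Prd C (map dm fs)"
  and cod_prodmap[simp]: "cd (prodmap C fs) = Prd C (map cd fs)"
  and prodmap_prj: "i < length fs \<Longrightarrow> Prj C (map cd fs) i \<cdot> prodmap C fs = fs ! i \<cdot> Prj C (map dm fs) i"
proof -
  let ?gs = "map (\<lambda>i. fs ! i \<cdot> Prj C (map dm fs) i) [0..<length fs]"
  have d: "\<And>i. i < length ?gs \<Longrightarrow> dm (?gs ! i) = Prd C (map dm fs)" by simp
  have c: "map cd ?gs = map cd fs" by (rule nth_equalityI) auto
  show "dm (prodmap C fs) = Prd C (map dm fs)" unfolding prodmap_def using tup(1)[OF d] .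
  show "cd (prodmap C fs) = Prd C (map cd fs)" unfolding prodmap_def using tup(2)[OF d] c by simp
  show "i < length fs \<Longrightarrow> Prj C (map cd fs) i \<cdot> prodmap C fs = fs ! i \<cdot> Prj C (map dm fs) i"
    unfolding prodmap_def using tup(3)[OF d, of i] c by simp
qed

lemma dom_canon[simp]: "dm (canon C Xs Y) = TO C (Prd C Xs) Y"
  and cod_canon[simp]: "cd (canon C Xs Y) = Prd C (map (\<lambda>X. TO C X Y) Xs)"
  and canon_prj: "i < length Xs \<Longrightarrow> Prj C (map (\<lambda>X. TO C X Y) Xs) i \<cdot> canon C Xs Y = Prj C Xs i \<otimes> ida Y"
proof -
  let ?gs = "map (\<lambda>i. Prj C Xs i \<otimes> ida Y) [0..<length Xs]"
  have d: "\<And>i. i < length ?gs \<Longrightarrow> dm (?gs ! i) = TO C (Prd C Xs) Y" by simp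
  have c: "map cd ?gs = map (\<lambda>X. TO C X Y) Xs" by (rule nth_equalityI) auto
  show "dm (canon C Xs Y) = TO C (Prd C Xs) Y" unfolding canon_def using tup(1)[OF d] .
  show "cd (canon C Xs Y) = Prd C (map (\<lambda>X. TO C X Y) Xs)" unfolding canon_def using tup(2)[OF d] c by simp
  show "i < length Xs \<Longrightarrow> Prj C (map (\<lambda>X. TO C X Y) Xs) i \<cdot> canon C Xs Y = Prj C Xs i \<otimes> ida Y"
    unfolding canon_def using tup(3)[OF d, of i] c by simp
qed

lemma prodmap_prj_at: "i < length fs \<Longrightarrow> Xs = map cd fs \<Longrightarrow>
    Prj C Xs i \<cdot> prodmap C fs = fs ! i \<cdot> Prj C (map dm fs) i"
  using prodmap_prj[of i fs] by simp

lemma prodmap_prj_comp: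
  assumes "i < length fs" "Xs = map cd fs" "cd k = Prd C (map dm fs)"
  shows "Prj C Xs i \<cdot> (prodmap C fs \<cdot> k) = fs ! i \<cdot> (Prj C (map dm fs) i \<cdot> k)"
proof -
  have "Prj C Xs i \<cdot> (prodmap C fs \<cdot> k) = (fs ! i \<cdot> Prj C (map dm fs) i) \<cdot> k"
    by (rule comp_reassoc[OF prodmap_prj_at[OF assms(1,2)]]) (use assms in simp_all)
  then show ?thesis using assms by simp
qed

lemma canon_prj_at: "i < length Xs \<Longrightarrow> Zs = map (\<lambda>X. TO C X Y) Xs \<Longrightarrow>
    Prj C Zs i \<cdot> canon C Xs Y = Prj C Xs i \<otimes> ida Y"
  using canon_prj[of i Xs Y] by simp

lemma canon_prj_comp:
  assumes "i < length Xs" "Zs = map (\<lambda>X. TO C X Y) Xs" "cd k = TO C (Prd C Xs) Y"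
  shows "Prj C Zs i \<cdot> (canon C Xs Y \<cdot> k) = (Prj C Xs i \<otimes> ida Y) \<cdot> k"
  by (rule comp_reassoc[OF canon_prj_at[OF assms(1,2)]]) (use assms in simp_all)

end

section \<open>The skew monoidal slice \<open>M/T\<close>\<close>

locale slice_of_monoid = monoidal_products C + ofs_category C E M
  for C :: "('o, 'a) moncat" and E M +
  fixes T :: 'o and \<eta> \<mu> j q0 :: 'a and bx qq :: "'a \<Rightarrow> 'a \<Rightarrow> 'a"
  assumes monoid: "is_monoid C T \<eta> \<mu>"
    and factorizations: "fact_data C E M T \<eta> \<mu> j q0 bx qq"
    and E_tensor: "\<forall>e s. e \<in> E \<and> sobj C M T s \<longrightarrow> TA C e (Ida C (Dom C s)) \<in> E"
begin

abbreviation obj where "obj s \<equiv> sobj C M T s"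

lemma obj_in_M: "obj s \<Longrightarrow> s \<in> M" and cod_obj[simp]: "obj s \<Longrightarrow> cd s = T"
  unfolding sobj_def by auto

lemma eta_typing[simp]: "dm \<eta> = Uo C" "cd \<eta> = T" and mu_typing[simp]: "dm \<mu> = TO C T T" "cd \<mu> = T"
  and unit_l: "\<mu> \<cdot> (\<eta> \<otimes> ida T) = Lu C T"
  and unit_r: "\<mu> \<cdot> ((ida T \<otimes> \<eta>) \<cdot> Ru C T) = ida T"
  and mu_assoc: "\<mu> \<cdot> (\<mu> \<otimes> ida T) = \<mu> \<cdot> ((ida T \<otimes> \<mu>) \<cdot> As C T T T)"
  using monoid unfolding is_monoid_def hom_def by auto

lemma q0_E: "q0 \<in> E" and j_M: "j \<in> M" and q0_dom[simp]: "dm q0 = Uo C" and q0_cod[simp]: "cd q0 = dm j"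
  and j_cod[simp]: "cd j = T" and eta_eq: "j \<cdot> q0 = \<eta>"
  using factorizations unfolding fact_data_def hom_def by auto

lemma obj_j[simp]: "obj j" unfolding sobj_def using j_M by simp

lemma qq_E: "obj s \<Longrightarrow> obj s' \<Longrightarrow> qq s s' \<in> E"
  and bx_M: "obj s \<Longrightarrow> obj s' \<Longrightarrow> bx s s' \<in> M"
  and qq_dom[simp]: "obj s \<Longrightarrow> obj s' \<Longrightarrow> dm (qq s s') = TO C (dm s) (dm s')"
  and qq_cod[simp]: "obj s \<Longrightarrow> obj s' \<Longrightarrow> cd (qq s s') = dm (bx s s')"
  and bx_cod[simp]: "obj s \<Longrightarrow> obj s' \<Longrightarrow> cd (bx s s') = T"
  and mu_fact: "obj s \<Longrightarrow> obj s' \<Longrightarrow> \<mu> \<cdot> (s \<otimes> s') = bx s s' \<cdot> qq s s'"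
  using factorizations unfolding fact_data_def hom_def by auto

lemma obj_bx[simp]: "obj s \<Longrightarrow> obj s' \<Longrightarrow> obj (bx s s')"
  using bx_M bx_cod unfolding sobj_def by blast

lemma E_tensor_id: "e \<in> E \<Longrightarrow> obj s \<Longrightarrow> e \<otimes> ida (dm s) \<in> E"
  using E_tensor by auto

lemma boxmap_square:
  assumes obj: "obj s1" "obj s1'" "obj s2" "obj s2'"
    and f: "dm f = dm s1" "cd f = dm s2" "s2 \<cdot> f = s1"
    and g: "dm g = dm s1'" "cd g = dm s2'" "s2' \<cdot> g = s1'"
  shows "bx s1 s1' \<cdot> qq s1 s1' = bx s2 s2' \<cdot> (qq s2 s2' \<cdot> (f \<otimes> g))"
proof -
  have "bx s2 s2' \<cdot> (qq s2 s2' \<cdot> (f \<otimes> g)) = (bx s2 s2' \<cdot> qq s2 s2') \<cdot> (f \<otimes> g)"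
    using obj f g by simp
  also have "\<dots> = (\<mu> \<cdot> (s2 \<otimes> s2')) \<cdot> (f \<otimes> g)" using mu_fact obj by simp
  also have "\<dots> = \<mu> \<cdot> ((s2 \<otimes> s2') \<cdot> (f \<otimes> g))" using obj f g by simp
  also have "\<dots> = \<mu> \<cdot> (s1 \<otimes> s1')" using obj f g by (simp add: tensor_comp)
  also have "\<dots> = bx s1 s1' \<cdot> qq s1 s1'" using mu_fact obj by simp
  finally show ?thesis by simp
qed

lemma boxmap_char:
  assumes obj: "obj s1" "obj s1'" "obj s2" "obj s2'"
    and f: "dm f = dm s1" "cd f = dm s2" "s2 \<cdot> f = s1"
    and g: "dm g = dm s1'" "cd g = dm s2'" "s2' \<cdot> g = s1'"
  shows "dm (boxmap C bx qq s1 s1' s2 s2' f g) = dm (bx s1 s1')"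
    "cd (boxmap C bx qq s1 s1' s2 s2' f g) = dm (bx s2 s2')"
    "boxmap C bx qq s1 s1' s2 s2' f g \<cdot> qq s1 s1' = qq s2 s2' \<cdot> (f \<otimes> g)"
    "bx s2 s2' \<cdot> boxmap C bx qq s1 s1' s2 s2' f g = bx s1 s1'"
proof -
  have "hom C (boxmap C bx qq s1 s1' s2 s2' f g) (dm (bx s1 s1')) (dm (bx s2 s2'))
     \<and> boxmap C bx qq s1 s1' s2 s2' f g \<cdot> qq s1 s1' = qq s2 s2' \<cdot> (f \<otimes> g)
     \<and> bx s2 s2' \<cdot> boxmap C bx qq s1 s1' s2 s2' f g = bx s1 s1'"
    unfolding boxmap_def
    by (rule the_diagonal[OF qq_E[OF obj(1,2)] bx_M[OF obj(3,4)]])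
       (use obj f g boxmap_square[OF obj f g] in simp_all)
  then show "dm (boxmap C bx qq s1 s1' s2 s2' f g) = dm (bx s1 s1')"
    "cd (boxmap C bx qq s1 s1' s2 s2' f g) = dm (bx s2 s2')"
    "boxmap C bx qq s1 s1' s2 s2' f g \<cdot> qq s1 s1' = qq s2 s2' \<cdot> (f \<otimes> g)"
    "bx s2 s2' \<cdot> boxmap C bx qq s1 s1' s2 s2' f g = bx s1 s1'" unfolding hom_def by auto
qed

lemma boxmap_comp:
  assumes obj: "obj s1" "obj s1'" "obj s2" "obj s2'"
    and f: "dm f = dm s1" "cd f = dm s2" "s2 \<cdot> f = s1"
    and g: "dm g = dm s1'" "cd g = dm s2'" "s2' \<cdot> g = s1'"
  shows "cd k = TO C (dm s1) (dm s1') \<Longrightarrow>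
      boxmap C bx qq s1 s1' s2 s2' f g \<cdot> (qq s1 s1' \<cdot> k) = qq s2 s2' \<cdot> ((f \<otimes> g) \<cdot> k)"
    "cd k' = dm (bx s1 s1') \<Longrightarrow> bx s2 s2' \<cdot> (boxmap C bx qq s1 s1' s2 s2' f g \<cdot> k') = bx s1 s1' \<cdot> k'"
  using boxmap_char[OF obj f g] obj f g by (simp_all flip: comp_assoc)

lemma slu_square:
  assumes obj: "obj s"
  shows "bx j s \<cdot> (qq j s \<cdot> (q0 \<otimes> ida (dm s))) = s \<cdot> Lu C (dm s)"
proof -
  have "bx j s \<cdot> (qq j s \<cdot> (q0 \<otimes> ida (dm s))) = (bx j s \<cdot> qq j s) \<cdot> (q0 \<otimes> ida (dm s))"
    using obj by simp
  also have "\<dots> = (\<mu> \<cdot> (j \<otimes> s)) \<cdot> (q0 \<otimes> ida (dm s))" using mu_fact obj by simp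
  also have "\<dots> = \<mu> \<cdot> ((j \<otimes> s) \<cdot> (q0 \<otimes> ida (dm s)))" using obj by simp
  also have "\<dots> = \<mu> \<cdot> (\<eta> \<otimes> s)" using obj by (simp add: tensor_comp eta_eq)
  also have "\<dots> = \<mu> \<cdot> ((\<eta> \<otimes> ida T) \<cdot> (ida (Uo C) \<otimes> s))" using obj by (simp add: tensor_comp)
  also have "\<dots> = (\<mu> \<cdot> (\<eta> \<otimes> ida T)) \<cdot> (ida (Uo C) \<otimes> s)" using obj by simp
  also have "\<dots> = Lu C T \<cdot> (ida (Uo C) \<otimes> s)" using unit_l by simp
  also have "\<dots> = s \<cdot> Lu C (dm s)" using lu_nat[of s] obj by simp
  finally show ?thesis .
qed

lemma slu_char:
  assumes obj: "obj s"
  shows "dm (slu C j q0 bx qq s) = dm (bx j s)" "cd (slu C j q0 bx qq s) = dm s"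
    "slu C j q0 bx qq s \<cdot> (qq j s \<cdot> (q0 \<otimes> ida (dm s))) = Lu C (dm s)"
    "s \<cdot> slu C j q0 bx qq s = bx j s"
proof -
  have E1: "qq j s \<cdot> (q0 \<otimes> ida (dm s)) \<in> E"
    using E_comp[OF E_tensor_id[OF q0_E obj] qq_E[OF obj_j obj]] obj by simp
  have "hom C (slu C j q0 bx qq s) (dm (bx j s)) (dm s)
      \<and> slu C j q0 bx qq s \<cdot> (qq j s \<cdot> (q0 \<otimes> ida (dm s))) = Lu C (dm s) \<and> s \<cdot> slu C j q0 bx qq s = bx j s"
    unfolding slu_def
    by (rule the_diagonal[OF E1 obj_in_M[OF obj]]) (use obj slu_square[OF obj] in simp_all)
  then show "dm (slu C j q0 bx qq s) = dm (bx j s)" "cd (slu C j q0 bx qq s) = dm s"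
    "slu C j q0 bx qq s \<cdot> (qq j s \<cdot> (q0 \<otimes> ida (dm s))) = Lu C (dm s)"
    "s \<cdot> slu C j q0 bx qq s = bx j s" unfolding hom_def by auto
qed

lemma sas_square:
  assumes obj: "obj s" "obj s'" "obj s''"
  shows "bx (bx s s') s'' \<cdot> (qq (bx s s') s'' \<cdot> (qq s s' \<otimes> ida (dm s'')))
      = bx s (bx s' s'') \<cdot> (qq s (bx s' s'') \<cdot> ((ida (dm s) \<otimes> qq s' s'') \<cdot> As C (dm s) (dm s') (dm s'')))"
proof -
  let ?A = "As C (dm s) (dm s') (dm s'')"
  have "bx (bx s s') s'' \<cdot> (qq (bx s s') s'' \<cdot> (qq s s' \<otimes> ida (dm s'')))
      = (bx (bx s s') s'' \<cdot> qq (bx s s') s'') \<cdot> (qq s s' \<otimes> ida (dm s''))" using obj by simp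
  also have "\<dots> = (\<mu> \<cdot> (bx s s' \<otimes> s'')) \<cdot> (qq s s' \<otimes> ida (dm s''))" using mu_fact obj by simp
  also have "\<dots> = \<mu> \<cdot> ((bx s s' \<cdot> qq s s') \<otimes> s'')" using obj by (simp add: tensor_comp)
  also have "\<dots> = \<mu> \<cdot> ((\<mu> \<cdot> (s \<otimes> s')) \<otimes> (ida T \<cdot> s''))" using mu_fact obj by simp
  also have "\<dots> = \<mu> \<cdot> ((\<mu> \<otimes> ida T) \<cdot> ((s \<otimes> s') \<otimes> s''))" using obj by (simp add: tensor_comp)
  also have "\<dots> = (\<mu> \<cdot> (\<mu> \<otimes> ida T)) \<cdot> ((s \<otimes> s') \<otimes> s'')" using obj by simp
  also have "\<dots> = (\<mu> \<cdot> ((ida T \<otimes> \<mu>) \<cdot> As C T T T)) \<cdot> ((s \<otimes> s') \<otimes> s'')" using mu_assoc by simp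
  also have "\<dots> = \<mu> \<cdot> ((ida T \<otimes> \<mu>) \<cdot> (As C T T T \<cdot> ((s \<otimes> s') \<otimes> s'')))" using obj by simp
  also have "\<dots> = \<mu> \<cdot> ((ida T \<otimes> \<mu>) \<cdot> ((s \<otimes> (s' \<otimes> s'')) \<cdot> ?A))" using as_nat[of s s' s''] obj by simp
  also have "\<dots> = \<mu> \<cdot> (((ida T \<otimes> \<mu>) \<cdot> (s \<otimes> (s' \<otimes> s''))) \<cdot> ?A)" using obj by simp
  also have "\<dots> = \<mu> \<cdot> ((s \<otimes> (\<mu> \<cdot> (s' \<otimes> s''))) \<cdot> ?A)" using obj by (simp add: tensor_comp)
  also have "\<dots> = \<mu> \<cdot> ((s \<otimes> (bx s' s'' \<cdot> qq s' s'')) \<cdot> ?A)" using mu_fact obj by simp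
  also have "\<dots> = \<mu> \<cdot> (((s \<otimes> bx s' s'') \<cdot> (ida (dm s) \<otimes> qq s' s'')) \<cdot> ?A)" using obj by (simp add: tensor_comp)
  also have "\<dots> = (\<mu> \<cdot> (s \<otimes> bx s' s'')) \<cdot> ((ida (dm s) \<otimes> qq s' s'') \<cdot> ?A)" using obj by simp
  also have "\<dots> = (bx s (bx s' s'') \<cdot> qq s (bx s' s'')) \<cdot> ((ida (dm s) \<otimes> qq s' s'') \<cdot> ?A)" using mu_fact obj by simp
  also have "\<dots> = bx s (bx s' s'') \<cdot> (qq s (bx s' s'') \<cdot> ((ida (dm s) \<otimes> qq s' s'') \<cdot> ?A))" using obj by simp
  finally show ?thesis .
qed

lemma sas_char:
  assumes obj: "obj s" "obj s'" "obj s''"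
  shows "dm (sas C bx qq s s' s'') = dm (bx (bx s s') s'')"
    "cd (sas C bx qq s s' s'') = dm (bx s (bx s' s''))"
    "sas C bx qq s s' s'' \<cdot> (qq (bx s s') s'' \<cdot> (qq s s' \<otimes> ida (dm s'')))
      = qq s (bx s' s'') \<cdot> ((ida (dm s) \<otimes> qq s' s'') \<cdot> As C (dm s) (dm s') (dm s''))"
    "bx s (bx s' s'') \<cdot> sas C bx qq s s' s'' = bx (bx s s') s''"
proof -
  have E1: "qq (bx s s') s'' \<cdot> (qq s s' \<otimes> ida (dm s'')) \<in> E"
    using E_comp[OF E_tensor_id[OF qq_E[OF obj(1,2)] obj(3)] qq_E[OF obj_bx[OF obj(1,2)] obj(3)]] obj
    by simp
  have "hom C (sas C bx qq s s' s'') (dm (bx (bx s s') s'')) (dm (bx s (bx s' s'')))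
      \<and> sas C bx qq s s' s'' \<cdot> (qq (bx s s') s'' \<cdot> (qq s s' \<otimes> ida (dm s'')))
        = qq s (bx s' s'') \<cdot> ((ida (dm s) \<otimes> qq s' s'') \<cdot> As C (dm s) (dm s') (dm s''))
      \<and> bx s (bx s' s'') \<cdot> sas C bx qq s s' s'' = bx (bx s s') s''"
    unfolding sas_def
    by (rule the_diagonal[OF E1 bx_M]) (use obj sas_square[OF obj] in simp_all)
  then show "dm (sas C bx qq s s' s'') = dm (bx (bx s s') s'')"
    "cd (sas C bx qq s s' s'') = dm (bx s (bx s' s''))"
    "sas C bx qq s s' s'' \<cdot> (qq (bx s s') s'' \<cdot> (qq s s' \<otimes> ida (dm s'')))
      = qq s (bx s' s'') \<cdot> ((ida (dm s) \<otimes> qq s' s'') \<cdot> As C (dm s) (dm s') (dm s''))"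
    "bx s (bx s' s'') \<cdot> sas C bx qq s s' s'' = bx (bx s s') s''" unfolding hom_def by auto
qed

lemma sas_q_comp:
  assumes obj: "obj s" "obj s'" "obj s''" and x: "cd x = TO C (dm s) (dm s')"
  shows "sas C bx qq s s' s'' \<cdot> (qq (bx s s') s'' \<cdot> ((qq s s' \<cdot> x) \<otimes> ida (dm s'')))
     = qq s (bx s' s'') \<cdot> ((ida (dm s) \<otimes> qq s' s'') \<cdot> (As C (dm s) (dm s') (dm s'') \<cdot> (x \<otimes> ida (dm s''))))"
proof -
  note S = sas_char[OF obj]
  have "(qq s s' \<cdot> x) \<otimes> ida (dm s'') = (qq s s' \<otimes> ida (dm s'')) \<cdot> (x \<otimes> ida (dm s''))"
    using obj x by (simp add: tensor_comp)
  then have "sas C bx qq s s' s'' \<cdot> (qq (bx s s') s'' \<cdot> ((qq s s' \<cdot> x) \<otimes> ida (dm s'')))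
     = (sas C bx qq s s' s'' \<cdot> (qq (bx s s') s'' \<cdot> (qq s s' \<otimes> ida (dm s'')))) \<cdot> (x \<otimes> ida (dm s''))"
    using obj x S(1,2) by (simp del: tensor_id)
  also have "\<dots> = qq s (bx s' s'') \<cdot> ((ida (dm s) \<otimes> qq s' s'') \<cdot> (As C (dm s) (dm s') (dm s'') \<cdot> (x \<otimes> ida (dm s''))))"
    unfolding S(3) using obj x by simp
  finally show ?thesis .
qed

lemma bx_sas_comp:
  assumes obj: "obj s" "obj s'" "obj s''" and k: "cd k = dm (bx (bx s s') s'')"
  shows "bx s (bx s' s'') \<cdot> (sas C bx qq s s' s'' \<cdot> k) = bx (bx s s') s'' \<cdot> k"
  using sas_char[OF obj] obj k by (simp flip: comp_assoc)

lemma sru_char: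
  assumes obj: "obj s"
  shows "dm (sru C j q0 bx qq s) = dm s" "cd (sru C j q0 bx qq s) = dm (bx s j)"
    "bx s j \<cdot> sru C j q0 bx qq s = s"
proof -
  show "dm (sru C j q0 bx qq s) = dm s" "cd (sru C j q0 bx qq s) = dm (bx s j)"
    unfolding sru_def using obj by simp_all
  have "bx s j \<cdot> sru C j q0 bx qq s = (bx s j \<cdot> qq s j) \<cdot> ((ida (dm s) \<otimes> q0) \<cdot> Ru C (dm s))"
    unfolding sru_def using obj by simp
  also have "\<dots> = (\<mu> \<cdot> (s \<otimes> j)) \<cdot> ((ida (dm s) \<otimes> q0) \<cdot> Ru C (dm s))" using mu_fact obj by simp
  also have "\<dots> = \<mu> \<cdot> (((s \<otimes> j) \<cdot> (ida (dm s) \<otimes> q0)) \<cdot> Ru C (dm s))" using obj by simp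
  also have "\<dots> = \<mu> \<cdot> (((ida T \<otimes> \<eta>) \<cdot> (s \<otimes> ida (Uo C))) \<cdot> Ru C (dm s))" using obj by (simp add: tensor_comp eta_eq)
  also have "\<dots> = (\<mu> \<cdot> (ida T \<otimes> \<eta>)) \<cdot> ((s \<otimes> ida (Uo C)) \<cdot> Ru C (dm s))" using obj by simp
  also have "\<dots> = (\<mu> \<cdot> (ida T \<otimes> \<eta>)) \<cdot> (Ru C T \<cdot> s)" using ru_nat[of s] obj by simp
  also have "\<dots> = (\<mu> \<cdot> ((ida T \<otimes> \<eta>) \<cdot> Ru C T)) \<cdot> s" using obj by simp
  also have "\<dots> = s" using unit_r obj by simp
  finally show "bx s j \<cdot> sru C j q0 bx qq s = s" .
qed

lemma sru_natural:
  assumes obj: "obj a" "obj b" and f: "dm f = dm a" "cd f = dm b" "b \<cdot> f = a"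
  shows "boxmap C bx qq a j b j f (ida (dm j)) \<cdot> sru C j q0 bx qq a = sru C j q0 bx qq b \<cdot> f"
  using obj f unfolding sru_def
  by (simp add: boxmap_comp[OF obj(1) obj_j obj(2) obj_j f] tensor_comp tensor_comp_assoc ru_nat_sym)

text \<open>The triangle axiom \<open>(R \<odot> \<lambda>) \<circ> \<alpha> \<circ> (\<rho> \<odot> S) = id\<close> of \<open>M/T\<close>, seen through \<open>q\<close>.\<close>
lemma slice_triangle_q:
  assumes obj: "obj r" "obj s" and x: "cd x = dm r"
  shows "boxmap C bx qq r (bx j s) r s (ida (dm r)) (slu C j q0 bx qq s) \<cdot>
     (sas C bx qq r j s \<cdot> (qq (bx r j) s \<cdot> ((sru C j q0 bx qq r \<cdot> x) \<otimes> ida (dm s))))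
   = qq r s \<cdot> (x \<otimes> ida (dm s))"
proof -
  let ?R = "dm r" and ?S = "dm s" and ?J = "dm j" and ?U = "Uo C"
  let ?w = "Ru C ?R \<cdot> x"
  let ?L = "slu C j q0 bx qq s"
  note L = slu_char[OF obj(2)]
  have lu: "(ida ?R \<otimes> ?L) \<cdot> ((ida ?R \<otimes> qq j s) \<cdot> ((ida ?R \<otimes> (q0 \<otimes> ida ?S)) \<cdot> k))
      = (ida ?R \<otimes> Lu C ?S) \<cdot> k"
    if k: "cd k = TO C ?R (TO C ?U ?S)" for k
    using obj k L by (simp add: tensor_comp_assoc)
  have sru_x: "sru C j q0 bx qq r \<cdot> x = qq r j \<cdot> ((ida ?R \<otimes> q0) \<cdot> ?w)"
    unfolding sru_def using obj x by simp
  have cx: "cd ((ida ?R \<otimes> q0) \<cdot> ?w) = TO C (dm r) (dm j)" using x by simp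
  have "boxmap C bx qq r (bx j s) r s (ida (dm r)) ?L \<cdot>
     (sas C bx qq r j s \<cdot> (qq (bx r j) s \<cdot> ((sru C j q0 bx qq r \<cdot> x) \<otimes> ida (dm s))))
     = boxmap C bx qq r (bx j s) r s (ida (dm r)) ?L \<cdot>
     (qq r (bx j s) \<cdot> ((ida ?R \<otimes> qq j s) \<cdot> (As C ?R ?J ?S \<cdot> (((ida ?R \<otimes> q0) \<cdot> ?w) \<otimes> ida ?S))))"
    by (simp only: sru_x sas_q_comp[OF obj(1) obj_j obj(2) cx])
  also have "\<dots> = qq r s \<cdot> ((ida ?R \<otimes> ?L) \<cdot> ((ida ?R \<otimes> qq j s)
      \<cdot> (As C ?R ?J ?S \<cdot> (((ida ?R \<otimes> q0) \<cdot> ?w) \<otimes> ida ?S))))"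
    by (rule boxmap_comp(1)[OF obj(1) obj_bx[OF obj_j obj(2)] obj(1) obj(2)]) (use obj x L in simp_all)
  also have "\<dots> = qq r s \<cdot> ((ida ?R \<otimes> ?L) \<cdot> ((ida ?R \<otimes> qq j s)
      \<cdot> ((ida ?R \<otimes> (q0 \<otimes> ida ?S)) \<cdot> (As C ?R ?U ?S \<cdot> (?w \<otimes> ida ?S)))))"
    using as_nat_middle[of ?w ?R q0 ?S] x by simp
  also have "\<dots> = qq r s \<cdot> ((ida ?R \<otimes> Lu C ?S) \<cdot> (As C ?R ?U ?S \<cdot> (?w \<otimes> ida ?S)))"
    using lu x by simp
  also have "\<dots> = qq r s \<cdot> (x \<otimes> ida ?S)" using triangle_comp[OF x] by simp
  finally show ?thesis .
qed

lemma mu_fact_comp: "obj s \<Longrightarrow> obj s' \<Longrightarrow> cd k = TO C (dm s) (dm s') \<Longrightarrow>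
   bx s s' \<cdot> (qq s s' \<cdot> k) = \<mu> \<cdot> ((s \<otimes> s') \<cdot> k)"
  using mu_fact[of s s'] by (simp flip: comp_assoc)

lemmas component_simps =
  prodmap_prj_comp canon_prj_comp prodmap_prj_at canon_prj_at mu_fact_comp tensor_comp tensor_comp_assoc o_def

lemma alg_op_TMD:
  assumes "alg_op_TM C M T bx qq rs r'' Q"
  shows "obj s \<Longrightarrow> dm (Q s) = Prd C (map (\<lambda>r. dm (bx r s)) rs)"
    "obj s \<Longrightarrow> cd (Q s) = dm (bx r'' s)"
    "obj s1 \<Longrightarrow> obj s2 \<Longrightarrow> dm f = dm s1 \<Longrightarrow> cd f = dm s2 \<Longrightarrow> s2 \<cdot> f = s1 \<Longrightarrow>
      Q s2 \<cdot> prodmap C (map (\<lambda>r. boxmap C bx qq r s1 r s2 (ida (dm r)) f) rs)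
      = boxmap C bx qq r'' s1 r'' s2 (ida (dm r'')) f \<cdot> Q s1"
    "obj s \<Longrightarrow> obj s' \<Longrightarrow>
      Q (bx s s') \<cdot> (prodmap C (map (\<lambda>r. sas C bx qq r s s') rs)
        \<cdot> (prodmap C (map (\<lambda>r. qq (bx r s) s') rs) \<cdot> canon C (map (\<lambda>r. dm (bx r s)) rs) (dm s')))
      = sas C bx qq r'' s s' \<cdot> (qq (bx r'' s) s' \<cdot> (Q s \<otimes> ida (dm s')))"
  using assms unfolding alg_op_TM_def smor_def hom_def by auto

lemma grades_TMD:
  "grades_TM C M T bx rs r'' Q \<phi> \<Longrightarrow> obj s \<Longrightarrow> bx r'' s \<cdot> Q s = \<phi> \<cdot> prodmap C (map (\<lambda>r. bx r s) rs)"
  unfolding grades_TM_def by auto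

end

section \<open>The graded operation \<open>\<psi>\<close>\<close>

locale factored_operation = slice_of_monoid C E M T \<eta> \<mu> j q0 bx qq
  for C :: "('o, 'a) moncat" and E M T \<eta> \<mu> j q0 bx qq +
  fixes n :: nat and \<phi> :: 'a and rs :: "'a list" and p r' :: 'a
  assumes E_canon: "\<forall>Xs Y. canon C Xs Y \<in> E"
    and E_prod: "\<forall>fs. set fs \<subseteq> E \<longrightarrow> prodmap C fs \<in> E"
    and phi: "is_alg_op C T \<mu> n \<phi>"
    and rs_len: "length rs = n" and obj_rs': "\<forall>r\<in>set rs. sobj C M T r"
    and p_E: "p \<in> E" and r'_M: "r' \<in> M" and p_hom: "hom C p (Prd C (map (Dom C) rs)) (Dom C r')"
    and r'_cod: "Cod C r' = T" and fact_phi: "Cmp C \<phi> (prodmap C rs) = Cmp C r' p"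
begin

lemma obj_rs[simp]: "r \<in> set rs \<Longrightarrow> obj r" using obj_rs' by auto

lemma obj_r'[simp]: "obj r'" unfolding sobj_def using r'_M r'_cod by simp

lemma p_dom[simp]: "dm p = Prd C (map dm rs)" and p_cod[simp]: "cd p = dm r'"
  using p_hom unfolding hom_def by auto

lemma phi_hom[simp]: "dm \<phi> = Prd C (replicate n T)" "cd \<phi> = T"
  and phi_alg: "\<phi> \<cdot> (prodmap C (replicate n \<mu>) \<cdot> canon C (replicate n T) T) = \<mu> \<cdot> (\<phi> \<otimes> ida T)"
  using phi unfolding is_alg_op_def hom_def by auto

lemma map_cd_rs[simp]: "map cd rs = replicate n T"
  using rs_len by (intro nth_equalityI) simp_all

declare map_replicate_const[simp]

lemma bx_prod_cover:
  assumes obj: "obj s"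
  shows "prodmap C (map (\<lambda>r. bx r s) rs) \<cdot> (prodmap C (map (\<lambda>r. qq r s) rs) \<cdot> canon C (map dm rs) (dm s))
    = prodmap C (replicate n \<mu>) \<cdot> (canon C (replicate n T) T \<cdot> (prodmap C rs \<otimes> s))"
proof (rule prod_arrow_eqI[where Xs = "replicate n T"], goal_cases component)
  case (component i)
  from component have i': "i < length rs" using rs_len by simp
  show ?case
    using i' obj rs_len
    by (simp add: component_simps cong: map_cong)
qed (use obj rs_len in \<open>simp_all add: o_def cong: map_cong\<close>)

abbreviation "cover s \<equiv> prodmap C (map (\<lambda>r. qq r s) rs) \<cdot> canon C (map dm rs) (dm s)"

lemma cover_in_E:
  assumes obj: "obj s"
  shows "cover s \<in> E"
proof (rule E_comp)
  show "canon C (map dm rs) (dm s) \<in> E" using E_canon by simp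
  have "set (map (\<lambda>r. qq r s) rs) \<subseteq> E" using qq_E obj by auto
  then show "prodmap C (map (\<lambda>r. qq r s) rs) \<in> E" using E_prod by blast
qed (use obj in \<open>simp add: o_def cong: map_cong\<close>)

lemma dom_cover[simp]: "obj s \<Longrightarrow> dm (cover s) = TO C (Prd C (map dm rs)) (dm s)"
  and cod_cover[simp]: "obj s \<Longrightarrow> cd (cover s) = Prd C (map (\<lambda>r. dm (bx r s)) rs)"
  by (simp_all add: o_def cong: map_cong)

lemma operation_square:
  assumes obj: "obj s"
  shows "(\<phi> \<cdot> prodmap C (map (\<lambda>r. bx r s) rs)) \<cdot> cover s = bx r' s \<cdot> (qq r' s \<cdot> (p \<otimes> ida (dm s)))"
proof -
  have "(\<phi> \<cdot> prodmap C (map (\<lambda>r. bx r s) rs)) \<cdot> cover s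
     = \<phi> \<cdot> (prodmap C (map (\<lambda>r. bx r s) rs) \<cdot> (prodmap C (map (\<lambda>r. qq r s) rs) \<cdot> canon C (map dm rs) (dm s)))"
    using obj rs_len by (simp add: o_def cong: map_cong)
  also have "\<dots> = \<phi> \<cdot> (prodmap C (replicate n \<mu>) \<cdot> (canon C (replicate n T) T \<cdot> (prodmap C rs \<otimes> s)))"
    using bx_prod_cover[OF obj] by simp
  also have "\<dots> = (\<phi> \<cdot> (prodmap C (replicate n \<mu>) \<cdot> canon C (replicate n T) T)) \<cdot> (prodmap C rs \<otimes> s)"
    using obj rs_len by (simp add: o_def cong: map_cong)
  also have "\<dots> = \<mu> \<cdot> ((\<phi> \<otimes> ida T) \<cdot> (prodmap C rs \<otimes> s))" using phi_alg obj rs_len by simp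
  also have "\<dots> = \<mu> \<cdot> ((r' \<cdot> p) \<otimes> s)" using obj rs_len fact_phi by (simp add: tensor_comp)
  also have "\<dots> = bx r' s \<cdot> (qq r' s \<cdot> (p \<otimes> ida (dm s)))" using obj by (simp add: component_simps)
  finally show ?thesis .
qed

lemma psi_char_ex1:
  assumes obj: "obj s"
  shows "\<exists>!x. psi_char C bx qq rs r' p \<phi> s x"
proof -
  have "\<exists>!x. dm x = cd (cover s) \<and> cd x = dm (bx r' s) \<and> x \<cdot> cover s = qq r' s \<cdot> (p \<otimes> ida (dm s))
      \<and> bx r' s \<cdot> x = \<phi> \<cdot> prodmap C (map (\<lambda>r. bx r s) rs)"
    by (rule diagonal_ex1[OF cover_in_E[OF obj] bx_M[OF obj_r' obj]])
       (use obj rs_len operation_square[OF obj] in \<open>simp_all add: o_def cong: map_cong\<close>)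
  then show ?thesis unfolding psi_char_def hom_def using obj by (simp add: conj_assoc)
qed

abbreviation "psi s \<equiv> THE x. psi_char C bx qq rs r' p \<phi> s x"

lemma psi_spec:
  assumes obj: "obj s"
  shows "dm (psi s) = Prd C (map (\<lambda>r. dm (bx r s)) rs)" "cd (psi s) = dm (bx r' s)"
    "psi s \<cdot> cover s = qq r' s \<cdot> (p \<otimes> ida (dm s))"
    "bx r' s \<cdot> psi s = \<phi> \<cdot> prodmap C (map (\<lambda>r. bx r s) rs)"
  using theI'[OF psi_char_ex1[OF obj]] unfolding psi_char_def hom_def by auto

lemma psi_in_E:
  assumes obj: "obj s"
  shows "psi s \<in> E"
proof (rule E_cancel_right[OF cover_in_E[OF obj]])
  show "dm (psi s) = cd (cover s)" using psi_spec[OF obj] obj by simp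
  have "qq r' s \<cdot> (p \<otimes> ida (dm s)) \<in> E"
    by (rule E_comp[OF E_tensor_id[OF p_E obj] qq_E[OF obj_r' obj]]) (use obj in simp)
  then show "psi s \<cdot> cover s \<in> E" using psi_spec(3)[OF obj] by simp
qed

lemma psi_cover_comp:
  assumes obj: "obj s" and k: "cd k = TO C (Prd C (map dm rs)) (dm s)"
  shows "psi s \<cdot> (prodmap C (map (\<lambda>r. qq r s) rs) \<cdot> (canon C (map dm rs) (dm s) \<cdot> k))
     = qq r' s \<cdot> ((p \<otimes> ida (dm s)) \<cdot> k)"
proof -
  note P = psi_spec[OF obj]
  have 1: "cover s \<cdot> k = prodmap C (map (\<lambda>r. qq r s) rs) \<cdot> (canon C (map dm rs) (dm s) \<cdot> k)"
    using obj k by (simp add: o_def cong: map_cong)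
  have 2: "psi s \<cdot> (cover s \<cdot> k) = (psi s \<cdot> cover s) \<cdot> k"
    by (rule comp_assoc[symmetric]) (use obj k P(1) in \<open>simp_all add: o_def cong: map_cong\<close>)
  have "psi s \<cdot> (prodmap C (map (\<lambda>r. qq r s) rs) \<cdot> (canon C (map dm rs) (dm s) \<cdot> k)) = (psi s \<cdot> cover s) \<cdot> k"
    using 1 2 by simp
  also have "\<dots> = qq r' s \<cdot> ((p \<otimes> ida (dm s)) \<cdot> k)" unfolding P(3) by (rule comp_assoc) (use obj k in simp_all)
  finally show ?thesis .
qed

lemma bx_psi_comp:
  assumes obj: "obj s" and k: "cd k = Prd C (map (\<lambda>r. dm (bx r s)) rs)"
  shows "bx r' s \<cdot> (psi s \<cdot> k) = \<phi> \<cdot> (prodmap C (map (\<lambda>r. bx r s) rs) \<cdot> k)"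
proof -
  note P = psi_spec[OF obj]
  have "bx r' s \<cdot> (psi s \<cdot> k) = (bx r' s \<cdot> psi s) \<cdot> k"
    by (rule comp_assoc[symmetric]) (use obj k P(1,2) in simp_all)
  also have "\<dots> = \<phi> \<cdot> (prodmap C (map (\<lambda>r. bx r s) rs) \<cdot> k)" unfolding P(4)
    by (rule comp_assoc) (use obj k rs_len in \<open>simp_all add: o_def cong: map_cong\<close>)
  finally show ?thesis .
qed

lemma boxmaps_cover:
  assumes obj: "obj s1" "obj s2" and f: "dm f = dm s1" "cd f = dm s2" "s2 \<cdot> f = s1"
  shows "prodmap C (map (\<lambda>r. boxmap C bx qq r s1 r s2 (ida (dm r)) f) rs) \<cdot> cover s1
    = cover s2 \<cdot> (ida (Prd C (map dm rs)) \<otimes> f)"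
proof (rule prod_arrow_eqI[where Xs = "map (\<lambda>r. dm (bx r s2)) rs"], goal_cases component)
  case (component i)
  from component have i': "i < length rs" by simp
  have obj_i: "obj (rs ! i)" using i' by simp
  note bk = boxmap_comp[OF obj_i obj(1) obj_i obj(2) _ _ _ f]
  show ?case
    using i' obj f obj_i by (simp add: component_simps bk boxmap_char cong: map_cong)
qed (use obj f in \<open>simp_all add: o_def boxmap_char cong: map_cong\<close>)

lemma bx_prod_boxmaps:
  assumes obj: "obj s1" "obj s2" and f: "dm f = dm s1" "cd f = dm s2" "s2 \<cdot> f = s1"
  shows "prodmap C (map (\<lambda>r. bx r s2) rs) \<cdot> prodmap C (map (\<lambda>r. boxmap C bx qq r s1 r s2 (ida (dm r)) f) rs)
    = prodmap C (map (\<lambda>r. bx r s1) rs)"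
proof (rule prod_arrow_eqI[where Xs = "replicate n T"], goal_cases component)
  case (component i)
  from component have i': "i < length rs" using rs_len by simp
  have obj_i: "obj (rs ! i)" using i' by simp
  note bk = boxmap_comp[OF obj_i obj(1) obj_i obj(2) _ _ _ f]
  show ?case
    using i' obj f obj_i rs_len by (simp add: component_simps bk boxmap_char cong: map_cong)
qed (use obj f rs_len in \<open>simp_all add: o_def boxmap_char cong: map_cong\<close>)

lemma psi_natural:
  assumes obj: "obj s1" "obj s2" and f: "dm f = dm s1" "cd f = dm s2" "s2 \<cdot> f = s1"
  shows "psi s2 \<cdot> prodmap C (map (\<lambda>r. boxmap C bx qq r s1 r s2 (ida (dm r)) f) rs)
    = boxmap C bx qq r' s1 r' s2 (ida (dm r')) f \<cdot> psi s1" (is "?lhs = ?rhs")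
proof (rule diagonal_unique[OF cover_in_E[OF obj(1)] bx_M[OF obj_r' obj(2)]])
  note P1 = psi_spec[OF obj(1)] and P2 = psi_spec[OF obj(2)]
  note B = boxmap_char[OF obj_r' obj(1) obj_r' obj(2) _ _ _ f]
  note bk = boxmap_comp[OF obj_r' obj(1) obj_r' obj(2) _ _ _ f]
  have "?lhs \<cdot> cover s1
     = psi s2 \<cdot> (prodmap C (map (\<lambda>r. boxmap C bx qq r s1 r s2 (ida (dm r)) f) rs) \<cdot> cover s1)"
    using obj f P2 by (simp add: o_def boxmap_char cong: map_cong)
  also have "\<dots> = psi s2 \<cdot> (cover s2 \<cdot> (ida (Prd C (map dm rs)) \<otimes> f))" using boxmaps_cover[OF obj f] by simp
  also have "\<dots> = qq r' s2 \<cdot> (p \<otimes> f)" using obj f by (simp add: psi_cover_comp tensor_comp o_def cong: map_cong)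
  also have "\<dots> = boxmap C bx qq r' s1 r' s2 (ida (dm r')) f \<cdot> (qq r' s1 \<cdot> (p \<otimes> ida (dm s1)))"
    using obj f by (simp add: bk tensor_comp)
  also have "\<dots> = ?rhs \<cdot> cover s1"
    using obj f P1 B by simp
  finally show "?lhs \<cdot> cover s1 = ?rhs \<cdot> cover s1" .
  have "bx r' s2 \<cdot> ?lhs
     = \<phi> \<cdot> (prodmap C (map (\<lambda>r. bx r s2) rs) \<cdot> prodmap C (map (\<lambda>r. boxmap C bx qq r s1 r s2 (ida (dm r)) f) rs))"
    using obj f by (simp add: bx_psi_comp o_def boxmap_char cong: map_cong)
  also have "\<dots> = \<phi> \<cdot> prodmap C (map (\<lambda>r. bx r s1) rs)" using bx_prod_boxmaps[OF obj f] by simp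
  also have "\<dots> = bx r' s2 \<cdot> ?rhs"
    using obj f P1 by (simp add: bk)
  finally show "bx r' s2 \<cdot> ?lhs = bx r' s2 \<cdot> ?rhs" .
qed (use obj f psi_spec[OF obj(1)] psi_spec[OF obj(2)] boxmap_char[OF obj_r' obj(1) obj_r' obj(2) _ _ _ f]
  in \<open>simp_all add: o_def boxmap_char cong: map_cong\<close>)

lemma sas_prod_cover:
  assumes obj: "obj s" "obj s'"
  shows "prodmap C (map (\<lambda>r. sas C bx qq r s s') rs) \<cdot> (prodmap C (map (\<lambda>r. qq (bx r s) s') rs)
      \<cdot> (canon C (map (\<lambda>r. dm (bx r s)) rs) (dm s') \<cdot> (cover s \<otimes> ida (dm s'))))
    = prodmap C (map (\<lambda>r. qq r (bx s s')) rs) \<cdot> (canon C (map dm rs) (dm (bx s s'))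
      \<cdot> ((ida (Prd C (map dm rs)) \<otimes> qq s s') \<cdot> As C (Prd C (map dm rs)) (dm s) (dm s')))"
proof (rule prod_arrow_eqI[where Xs = "map (\<lambda>r. dm (bx r (bx s s'))) rs"], goal_cases component)
  case (component i)
  from component have i': "i < length rs" by simp
  have obj_i: "obj (rs ! i)" using i' by simp
  show ?case
    using i' obj obj_i by (simp add: component_simps sas_q_comp sas_char as_nat_sym as_nat_comp cong: map_cong)
qed (use obj in \<open>simp_all add: o_def sas_char cong: map_cong\<close>)

lemma bx_prod_sas:
  assumes obj: "obj s" "obj s'"
  shows "prodmap C (map (\<lambda>r. bx r (bx s s')) rs) \<cdot> (prodmap C (map (\<lambda>r. sas C bx qq r s s') rs) \<cdot> (prodmap C (map (\<lambda>r. qq (bx r s) s') rs)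
      \<cdot> canon C (map (\<lambda>r. dm (bx r s)) rs) (dm s')))
    = prodmap C (replicate n \<mu>) \<cdot> (canon C (replicate n T) T \<cdot> (prodmap C (map (\<lambda>r. bx r s) rs) \<otimes> s'))"
proof (rule prod_arrow_eqI[where Xs = "replicate n T"], goal_cases component)
  case (component i)
  from component have i': "i < length rs" using rs_len by simp
  have obj_i: "obj (rs ! i)" using i' by simp
  show ?case
    using i' obj obj_i rs_len by (simp add: component_simps bx_sas_comp sas_char cong: map_cong)
qed (use obj rs_len in \<open>simp_all add: o_def sas_char cong: map_cong\<close>)

lemma psi_multiplicative:
  assumes obj: "obj s" "obj s'"
  shows "psi (bx s s') \<cdot> (prodmap C (map (\<lambda>r. sas C bx qq r s s') rs) \<cdot> (prodmap C (map (\<lambda>r. qq (bx r s) s') rs)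
      \<cdot> canon C (map (\<lambda>r. dm (bx r s)) rs) (dm s')))
    = sas C bx qq r' s s' \<cdot> (qq (bx r' s) s' \<cdot> (psi s \<otimes> ida (dm s')))" (is "?lhs = ?rhs")
proof (rule diagonal_unique[OF E_tensor_id[OF cover_in_E[OF obj(1)] obj(2)] bx_M[OF obj_r' obj_bx[OF obj]]])
  note P = psi_spec[OF obj(1)] and Pb = psi_spec[OF obj_bx[OF obj]]
  note S = sas_char[OF obj_r' obj]
  have "?lhs \<cdot> (cover s \<otimes> ida (dm s'))
    = psi (bx s s') \<cdot> (prodmap C (map (\<lambda>r. sas C bx qq r s s') rs) \<cdot> (prodmap C (map (\<lambda>r. qq (bx r s) s') rs)
      \<cdot> (canon C (map (\<lambda>r. dm (bx r s)) rs) (dm s') \<cdot> (cover s \<otimes> ida (dm s')))))"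
    using obj Pb(1) by (simp add: o_def sas_char cong: map_cong)
  also have "\<dots> = psi (bx s s') \<cdot> (prodmap C (map (\<lambda>r. qq r (bx s s')) rs) \<cdot> (canon C (map dm rs) (dm (bx s s'))
      \<cdot> ((ida (Prd C (map dm rs)) \<otimes> qq s s') \<cdot> As C (Prd C (map dm rs)) (dm s) (dm s'))))"
    using sas_prod_cover[OF obj] by simp
  also have "\<dots> = qq r' (bx s s') \<cdot> ((p \<otimes> qq s s') \<cdot> As C (Prd C (map dm rs)) (dm s) (dm s'))"
    using obj by (simp add: psi_cover_comp tensor_comp_assoc)
  also have "\<dots> = ?rhs \<cdot> (cover s \<otimes> ida (dm s'))"
    using obj P S by (simp add: tensor_comp sas_q_comp as_nat_sym tensor_comp_assoc)
  finally show "?lhs \<cdot> (cover s \<otimes> ida (dm s')) = ?rhs \<cdot> (cover s \<otimes> ida (dm s'))" .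
  have "bx r' (bx s s') \<cdot> ?lhs
    = \<phi> \<cdot> (prodmap C (map (\<lambda>r. bx r (bx s s')) rs) \<cdot> (prodmap C (map (\<lambda>r. sas C bx qq r s s') rs) \<cdot> (prodmap C (map (\<lambda>r. qq (bx r s) s') rs)
      \<cdot> canon C (map (\<lambda>r. dm (bx r s)) rs) (dm s'))))"
    using obj by (simp add: bx_psi_comp o_def sas_char cong: map_cong)
  also have "\<dots> = \<phi> \<cdot> (prodmap C (replicate n \<mu>) \<cdot> (canon C (replicate n T) T \<cdot> (prodmap C (map (\<lambda>r. bx r s) rs) \<otimes> s')))"
    using bx_prod_sas[OF obj] by simp
  also have "\<dots> = (\<phi> \<cdot> (prodmap C (replicate n \<mu>) \<cdot> canon C (replicate n T) T)) \<cdot> (prodmap C (map (\<lambda>r. bx r s) rs) \<otimes> s')"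
    using obj rs_len by (simp add: o_def cong: map_cong)
  also have "\<dots> = \<mu> \<cdot> ((\<phi> \<cdot> prodmap C (map (\<lambda>r. bx r s) rs)) \<otimes> s')"
    unfolding phi_alg using obj rs_len by (simp add: tensor_comp o_def cong: map_cong)
  also have "\<dots> = bx r' (bx s s') \<cdot> ?rhs"
    using obj P S by (simp add: bx_sas_comp component_simps)
  finally show "bx r' (bx s s') \<cdot> ?lhs = bx r' (bx s s') \<cdot> ?rhs" .
qed (use obj psi_spec[OF obj(1)] psi_spec[OF obj_bx[OF obj]] sas_char[OF obj_r' obj] in \<open>simp_all add: o_def sas_char cong: map_cong\<close>)

lemma psi_alg_op: "alg_op_TM C M T bx qq rs r' psi"
  unfolding alg_op_TM_def
proof (intro conjI allI impI)
  fix s assume "obj s"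
  then show "hom C (psi s) (Prd C (map (\<lambda>r. dm (bx r s)) rs)) (dm (bx r' s))"
    using psi_spec unfolding hom_def by blast
next
  fix s1 s2 f assume "obj s1 \<and> obj s2 \<and> smor C f s1 s2"
  then show "psi s2 \<cdot> prodmap C (map (\<lambda>r. boxmap C bx qq r s1 r s2 (ida (dm r)) f) rs)
      = boxmap C bx qq r' s1 r' s2 (ida (dm r')) f \<cdot> psi s1"
    using psi_natural unfolding smor_def hom_def by blast
qed (use psi_multiplicative in blast)

lemma psi_grades: "grades_TM C M T bx rs r' psi \<phi>"
  unfolding grades_TM_def using psi_spec(4) by blast

abbreviation "runits \<equiv> prodmap C (map (\<lambda>r. sru C j q0 bx qq r) rs)"

lemma dom_runits[simp]: "dm runits = Prd C (map dm rs)"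
  and cod_runits[simp]: "cd runits = Prd C (map (\<lambda>r. dm (bx r j)) rs)"
  by (simp_all add: o_def sru_char cong: map_cong)

lemma runits_eq: "runits = prodmap C (map (\<lambda>r. qq r j) rs) \<cdot> (canon C (map dm rs) (dm j)
    \<cdot> ((ida (Prd C (map dm rs)) \<otimes> q0) \<cdot> Ru C (Prd C (map dm rs))))"
proof (rule prod_arrow_eqI[where Xs = "map (\<lambda>r. dm (bx r j)) rs"], goal_cases component)
  case (component i)
  from component have i': "i < length rs" by simp
  have obj_i: "obj (rs ! i)" using i' by simp
  show ?case
    using i' obj_i by (simp add: component_simps sru_def ru_nat_sym sru_char cong: map_cong)
qed (simp_all add: o_def sru_char cong: map_cong)

lemma bx_prod_runits: "prodmap C (map (\<lambda>r. bx r j) rs) \<cdot> runits = prodmap C rs"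
proof (rule prod_arrow_eqI[where Xs = "replicate n T"], goal_cases component)
  case (component i)
  from component have i': "i < length rs" using rs_len by simp
  have obj_i: "obj (rs ! i)" using i' by simp
  have k: "bx (rs ! i) j \<cdot> (sru C j q0 bx qq (rs ! i) \<cdot> k) = rs ! i \<cdot> k" if "cd k = dm (rs ! i)" for k
    using sru_char[OF obj_i] that by (simp flip: comp_assoc)
  show ?case
    using i' obj_i rs_len by (simp add: component_simps k sru_char cong: map_cong)
qed (use rs_len in \<open>simp_all add: o_def sru_char cong: map_cong\<close>)

lemma psi_at_unit: "sru C j q0 bx qq r' \<cdot> p = psi j \<cdot> runits"
proof -
  have "psi j \<cdot> runits = qq r' j \<cdot> ((p \<otimes> ida (dm j)) \<cdot> ((ida (Prd C (map dm rs)) \<otimes> q0) \<cdot> Ru C (Prd C (map dm rs))))"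
    by (subst runits_eq) (simp add: psi_cover_comp)
  also have "\<dots> = sru C j q0 bx qq r' \<cdot> p"
    unfolding sru_def by (simp add: tensor_comp_assoc ru_nat_sym)
  finally show ?thesis by simp
qed

lemma cover_through_unit:
  assumes obj: "obj s"
  shows "cover s = prodmap C (map (\<lambda>r. boxmap C bx qq r (bx j s) r s (ida (dm r)) (slu C j q0 bx qq s)) rs)
    \<cdot> (prodmap C (map (\<lambda>r. sas C bx qq r j s) rs) \<cdot> (prodmap C (map (\<lambda>r. qq (bx r j) s) rs)
    \<cdot> (canon C (map (\<lambda>r. dm (bx r j)) rs) (dm s) \<cdot> (runits \<otimes> ida (dm s)))))"
proof (rule prod_arrow_eqI[where Xs = "map (\<lambda>r. dm (bx r s)) rs"], goal_cases component)
  case (component i)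
  from component have i': "i < length rs" by simp
  have obj_i: "obj (rs ! i)" using i' by simp
  note Z = slice_triangle_q[OF obj_i obj]
  note L = slu_char[OF obj]
  have B: "cd (boxmap C bx qq r (bx j s) r s (ida (dm r)) (slu C j q0 bx qq s)) = dm (bx r s)"
     "dm (boxmap C bx qq r (bx j s) r s (ida (dm r)) (slu C j q0 bx qq s)) = dm (bx r (bx j s))"
    if "obj r" for r using boxmap_char[OF that obj_bx[OF obj_j obj] that obj _ _ _ L(1,2,4)] by simp_all
  show ?case
    using i' obj_i obj by (simp add: component_simps Z sru_char sas_char B cong: map_cong)
qed (use obj in \<open>simp_all add: o_def sru_char sas_char slu_char boxmap_char cong: map_cong\<close>)

section \<open>Universality of \<open>\<psi>\<close>\<close>

text \<open>The unit law of \<open>M/T\<close> lets every cover factor through the \<open>J\<close>-component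
  (\<open>cover_through_unit\<close>); multiplicativity of \<open>Q\<close> at \<open>(J, S)\<close> then
  expresses \<open>Q S\<close> on the cover by \<open>Q J\<close> alone.\<close>
lemma alg_op_on_cover:
  assumes obj'': "obj r''" and Q: "alg_op_TM C M T bx qq rs r'' Q" and obj: "obj s"
    and g: "cd g = dm r''" "sru C j q0 bx qq r'' \<cdot> g = Q j \<cdot> runits"
  shows "Q s \<cdot> cover s = qq r'' s \<cdot> (g \<otimes> ida (dm s))"
proof -
  note L = slu_char[OF obj]
  let ?BL = "prodmap C (map (\<lambda>r. boxmap C bx qq r (bx j s) r s (ida (dm r)) (slu C j q0 bx qq s)) rs)"
  let ?SA = "prodmap C (map (\<lambda>r. sas C bx qq r j s) rs)"
  let ?PQ = "prodmap C (map (\<lambda>r. qq (bx r j) s) rs)"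
  let ?CN = "canon C (map (\<lambda>r. dm (bx r j)) rs) (dm s)"
  let ?BL'' = "boxmap C bx qq r'' (bx j s) r'' s (ida (dm r'')) (slu C j q0 bx qq s)"
  have BL: "cd (boxmap C bx qq r (bx j s) r s (ida (dm r)) (slu C j q0 bx qq s)) = dm (bx r s)"
    "dm (boxmap C bx qq r (bx j s) r s (ida (dm r)) (slu C j q0 bx qq s)) = dm (bx r (bx j s))"
    if "obj r" for r using boxmap_char[OF that obj_bx[OF obj_j obj] that obj _ _ _ L(1,2,4)] by simp_all
  note Qjs = alg_op_TMD(1,2)[OF Q obj_bx[OF obj_j obj]]
  note Qj = alg_op_TMD(1,2)[OF Q obj_j]
  note Qs = alg_op_TMD(1,2)[OF Q obj]
  have "Q s \<cdot> cover s = Q s \<cdot> (?BL \<cdot> (?SA \<cdot> (?PQ \<cdot> (?CN \<cdot> (runits \<otimes> ida (dm s))))))"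
    using cover_through_unit[OF obj] by simp
  also have "\<dots> = (Q s \<cdot> ?BL) \<cdot> (?SA \<cdot> (?PQ \<cdot> (?CN \<cdot> (runits \<otimes> ida (dm s)))))"
    by (rule comp_assoc[symmetric]) (use obj Qs BL in \<open>simp_all add: o_def sas_char sru_char cong: map_cong\<close>)
  also have "\<dots> = (?BL'' \<cdot> Q (bx j s)) \<cdot> (?SA \<cdot> (?PQ \<cdot> (?CN \<cdot> (runits \<otimes> ida (dm s)))))"
    using alg_op_TMD(3)[OF Q obj_bx[OF obj_j obj] obj L(1,2,4)] by simp
  also have "\<dots> = ?BL'' \<cdot> ((Q (bx j s) \<cdot> (?SA \<cdot> (?PQ \<cdot> ?CN))) \<cdot> (runits \<otimes> ida (dm s)))"
    using obj obj'' Qjs L boxmap_char[OF obj'' obj_bx[OF obj_j obj] obj'' obj _ _ _ L(1,2,4)]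
    by (simp add: o_def sas_char sru_char cong: map_cong)
  also have "\<dots> = ?BL'' \<cdot> ((sas C bx qq r'' j s \<cdot> (qq (bx r'' j) s \<cdot> (Q j \<otimes> ida (dm s)))) \<cdot> (runits \<otimes> ida (dm s)))"
    using alg_op_TMD(4)[OF Q obj_j obj] by simp
  also have "\<dots> = ?BL'' \<cdot> (sas C bx qq r'' j s \<cdot> (qq (bx r'' j) s \<cdot> ((Q j \<cdot> runits) \<otimes> ida (dm s))))"
    using obj obj'' Qj by (simp add: tensor_comp o_def sas_char sru_char cong: map_cong)
  also have "\<dots> = ?BL'' \<cdot> (sas C bx qq r'' j s \<cdot> (qq (bx r'' j) s \<cdot> ((sru C j q0 bx qq r'' \<cdot> g) \<otimes> ida (dm s))))"
    using g(2) by simp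
  also have "\<dots> = qq r'' s \<cdot> (g \<otimes> ida (dm s))" by (rule slice_triangle_q[OF obj'' obj g(1)])
  finally show ?thesis .
qed

lemma unit_component_factor:
  assumes obj'': "obj r''" and iso: "iso C (sru C j q0 bx qq r'')"
    and Q: "alg_op_TM C M T bx qq rs r'' Q" and G: "grades_TM C M T bx rs r'' Q \<phi>"
  obtains g where "dm g = Prd C (map dm rs)" "cd g = dm r''"
    "sru C j q0 bx qq r'' \<cdot> g = Q j \<cdot> runits" "r'' \<cdot> g = r' \<cdot> p"
proof -
  note SR = sru_char[OF obj'']
  obtain u where "dm u = cd (sru C j q0 bx qq r'')" "cd u = dm (sru C j q0 bx qq r'')"
    "sru C j q0 bx qq r'' \<cdot> u = ida (cd (sru C j q0 bx qq r''))"
    using isoE[OF iso] by metis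
  then have u: "dm u = dm (bx r'' j)" "cd u = dm r''" "sru C j q0 bx qq r'' \<cdot> u = ida (dm (bx r'' j))"
    using SR(1,2) by simp_all
  have Qj: "dm (Q j \<cdot> runits) = Prd C (map dm rs)" "cd (Q j \<cdot> runits) = dm (bx r'' j)"
    using alg_op_TMD(1,2)[OF Q obj_j] obj'' by (simp_all add: o_def sru_char cong: map_cong)
  define g where "g = u \<cdot> (Q j \<cdot> runits)"
  have g_typing: "dm g = Prd C (map dm rs)" "cd g = dm r''"
    unfolding g_def using Qj u by simp_all
  have sg: "sru C j q0 bx qq r'' \<cdot> g = Q j \<cdot> runits"
  proof -
    have "sru C j q0 bx qq r'' \<cdot> g = ida (dm (bx r'' j)) \<cdot> (Q j \<cdot> runits)"
      unfolding g_def by (rule comp_reassoc[OF u(3)]) (use u SR Qj in simp_all)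
    then show ?thesis using Qj by simp
  qed
  have "r'' \<cdot> g = (bx r'' j \<cdot> sru C j q0 bx qq r'') \<cdot> g" using SR(3) by simp
  also have "\<dots> = bx r'' j \<cdot> (sru C j q0 bx qq r'' \<cdot> g)"
    by (rule comp_assoc) (use SR g_typing in simp_all)
  also have "\<dots> = bx r'' j \<cdot> (Q j \<cdot> runits)" using sg by simp
  also have "\<dots> = (bx r'' j \<cdot> Q j) \<cdot> runits"
    by (rule comp_assoc[symmetric]) (use alg_op_TMD(1,2)[OF Q obj_j] obj'' in \<open>simp_all add: o_def sru_char cong: map_cong\<close>)
  also have "\<dots> = \<phi> \<cdot> (prodmap C (map (\<lambda>r. bx r j) rs) \<cdot> runits)"
    unfolding grades_TMD[OF G obj_j] by (rule comp_assoc) (use rs_len in \<open>simp_all add: o_def sru_char cong: map_cong\<close>)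
  also have "\<dots> = r' \<cdot> p" using bx_prod_runits fact_phi by simp
  finally show ?thesis using that g_typing sg by blast
qed

lemma sru_comp_via_psi:
  assumes obj'': "obj r''" and f: "dm f = dm r'" "cd f = dm r''" "r'' \<cdot> f = r'"
  shows "sru C j q0 bx qq r'' \<cdot> (f \<cdot> p) = (boxmap C bx qq r' j r'' j f (ida (dm j)) \<cdot> psi j) \<cdot> runits"
proof -
  have idj: "dm (ida (dm j)) = dm j" "cd (ida (dm j)) = dm j" "j \<cdot> ida (dm j) = j" by simp_all
  note B = boxmap_char[OF obj_r' obj_j obj'' obj_j f idj]
  note SR = sru_char[OF obj'']
  have "sru C j q0 bx qq r'' \<cdot> (f \<cdot> p) = (sru C j q0 bx qq r'' \<cdot> f) \<cdot> p"
    by (rule comp_assoc[symmetric]) (use f SR in simp_all)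
  also have "\<dots> = (boxmap C bx qq r' j r'' j f (ida (dm j)) \<cdot> sru C j q0 bx qq r') \<cdot> p"
    using sru_natural[OF obj_r' obj'' f] by simp
  also have "\<dots> = boxmap C bx qq r' j r'' j f (ida (dm j)) \<cdot> (psi j \<cdot> runits)"
    using B sru_char[OF obj_r'] psi_at_unit by simp
  also have "\<dots> = (boxmap C bx qq r' j r'' j f (ida (dm j)) \<cdot> psi j) \<cdot> runits"
    by (rule comp_assoc[symmetric]) (use B psi_spec[OF obj_j] in \<open>simp_all add: o_def sru_char cong: map_cong\<close>)
  finally show ?thesis .
qed

lemma boxmap_psi_eq:
  assumes obj'': "obj r''" and Q: "alg_op_TM C M T bx qq rs r'' Q" and G: "grades_TM C M T bx rs r'' Q \<phi>"
    and obj: "obj s" and f: "dm f = dm r'" "cd f = dm r''" "r'' \<cdot> f = r'"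
    and unit: "sru C j q0 bx qq r'' \<cdot> (f \<cdot> p) = Q j \<cdot> runits"
  shows "boxmap C bx qq r' s r'' s f (ida (dm s)) \<cdot> psi s = Q s"
proof -
  note P = psi_spec[OF obj]
  have ids: "dm (ida (dm s)) = dm s" "cd (ida (dm s)) = dm s" "s \<cdot> ida (dm s) = s" using obj by simp_all
  note B = boxmap_char[OF obj_r' obj obj'' obj f ids]
  note Bc = boxmap_comp[OF obj_r' obj obj'' obj f ids]
  have "(boxmap C bx qq r' s r'' s f (ida (dm s)) \<cdot> psi s) \<cdot> cover s
      = boxmap C bx qq r' s r'' s f (ida (dm s)) \<cdot> (psi s \<cdot> cover s)"
    by (rule comp_assoc) (use obj P(1,2) B in simp_all)
  also have "\<dots> = qq r'' s \<cdot> ((f \<otimes> ida (dm s)) \<cdot> (p \<otimes> ida (dm s)))"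
    unfolding P(3) by (rule Bc(1)) (use obj in simp)
  also have "\<dots> = qq r'' s \<cdot> ((f \<cdot> p) \<otimes> ida (dm s))" using f obj by (simp add: tensor_comp)
  also have "\<dots> = Q s \<cdot> cover s"
    using alg_op_on_cover[OF obj'' Q obj _ unit] f by simp
  finally have on_cover: "(boxmap C bx qq r' s r'' s f (ida (dm s)) \<cdot> psi s) \<cdot> cover s = Q s \<cdot> cover s" .
  have graded: "bx r'' s \<cdot> (boxmap C bx qq r' s r'' s f (ida (dm s)) \<cdot> psi s) = bx r'' s \<cdot> Q s"
    using Bc(2)[of "psi s"] P grades_TMD[OF G obj] obj by simp
  show ?thesis
    by (rule diagonal_unique[OF cover_in_E[OF obj] bx_M[OF obj'' obj] _ _ _ _ on_cover graded])
       (use obj P(1,2) B alg_op_TMD(1,2)[OF Q obj] in \<open>simp_all add: o_def cong: map_cong\<close>)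
qed

lemma psi_universal:
  assumes obj'': "obj r''" and iso: "iso C (sru C j q0 bx qq r'')"
    and Q: "alg_op_TM C M T bx qq rs r'' Q" and G: "grades_TM C M T bx rs r'' Q \<phi>"
  shows "\<exists>!f. smor C f r' r''
    \<and> (\<forall>s. obj s \<longrightarrow> boxmap C bx qq r' s r'' s f (ida (dm s)) \<cdot> psi s = Q s)"
proof -
  obtain g where g: "dm g = Prd C (map dm rs)" "cd g = dm r''"
    "sru C j q0 bx qq r'' \<cdot> g = Q j \<cdot> runits" "r'' \<cdot> g = r' \<cdot> p"
    using unit_component_factor[OF obj'' iso Q G] .
  have "\<exists>!d. dm d = cd p \<and> cd d = dm r'' \<and> d \<cdot> p = g \<and> r'' \<cdot> d = r'"
    by (rule diagonal_ex1[OF p_E obj_in_M[OF obj'']]) (use g obj'' in simp_all)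
  then obtain f where f: "dm f = dm r'" "cd f = dm r''" "f \<cdot> p = g" "r'' \<cdot> f = r'" by auto
  have unit: "sru C j q0 bx qq r'' \<cdot> (f \<cdot> p) = Q j \<cdot> runits" using f(3) g(3) by simp
  show ?thesis
  proof (rule ex1I)
    show "smor C f r' r'' \<and> (\<forall>s. obj s \<longrightarrow> boxmap C bx qq r' s r'' s f (ida (dm s)) \<cdot> psi s = Q s)"
      using f boxmap_psi_eq[OF obj'' Q G _ f(1,2,4) unit] unfolding smor_def hom_def by simp
  next
    fix f' assume f': "smor C f' r' r''
      \<and> (\<forall>s. obj s \<longrightarrow> boxmap C bx qq r' s r'' s f' (ida (dm s)) \<cdot> psi s = Q s)"
    then have f'_typing: "dm f' = dm r'" "cd f' = dm r''" "r'' \<cdot> f' = r'"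
      unfolding smor_def hom_def by auto
    have "sru C j q0 bx qq r'' \<cdot> (f' \<cdot> p) = sru C j q0 bx qq r'' \<cdot> g"
      using sru_comp_via_psi[OF obj'' f'_typing] f' g(3) by simp
    from iso_cancel_left[OF iso _ _ this] have f'p: "f' \<cdot> p = g"
      using f'_typing g sru_char[OF obj''] by simp
    show "f' = f"
      by (rule diagonal_unique[OF p_E obj_in_M[OF obj'']]) (use f f'_typing f'p in simp_all)
  qed
qed

end

theorem theorem5p6:
  fixes C :: "('o, 'a) moncat" and E M :: "'a set"
    and T :: 'o and \<eta> \<mu> j q0 :: 'a and bx qq :: "'a \<Rightarrow> 'a \<Rightarrow> 'a"
    and n :: nat and \<phi> :: 'a and rs :: "'a list" and p r' :: 'a
  assumes monoidal: "is_monoidal C"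
    and products: "has_finite_products C"
    and monoid: "is_monoid C T \<eta> \<mu>"
    and ofs: "is_ofs C E M"
    and factorizations: "fact_data C E M T \<eta> \<mu> j q0 bx qq"
    and E_tensor: "\<forall>e s. e \<in> E \<and> sobj C M T s \<longrightarrow> TA C e (Ida C (Dom C s)) \<in> E"
    and slice_mon: "slice_monoidal C M T j q0 bx qq"
    and E_canon: "\<forall>Xs Y. canon C Xs Y \<in> E"
    and E_prod: "\<forall>fs. set fs \<subseteq> E \<longrightarrow> prodmap C fs \<in> E"
    and phi: "is_alg_op C T \<mu> n \<phi>"
    and rs: "length rs = n" "\<forall>r\<in>set rs. sobj C M T r"
    and fact_phi: "p \<in> E" "r' \<in> M" "hom C p (Prd C (map (Dom C) rs)) (Dom C r')"
      "Cod C r' = T" "Cmp C \<phi> (prodmap C rs) = Cmp C r' p"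
  defines "\<psi> \<equiv> (\<lambda>s. THE x. psi_char C bx qq rs r' p \<phi> s x)"
  shows "(\<forall>s. sobj C M T s \<longrightarrow> (\<exists>!x. psi_char C bx qq rs r' p \<phi> s x))
    \<and> alg_op_TM C M T bx qq rs r' \<psi>
    \<and> grades_TM C M T bx rs r' \<psi> \<phi>
    \<and> (\<forall>s. sobj C M T s \<longrightarrow> \<psi> s \<in> E)
    \<and> (\<forall>r'' \<psi>'. sobj C M T r'' \<and> alg_op_TM C M T bx qq rs r'' \<psi>'
          \<and> grades_TM C M T bx rs r'' \<psi>' \<phi> \<longrightarrow>
        (\<exists>!f. smor C f r' r''
           \<and> (\<forall>s. sobj C M T s \<longrightarrow>
                Cmp C (boxmap C bx qq r' s r'' s f (Ida C (Dom C s))) (\<psi> s) = \<psi>' s)))"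
proof -
  have category: "is_category C" using monoidal unfolding is_monoidal_def by simp
  interpret factored_operation C E M T \<eta> \<mu> j q0 bx qq n \<phi> rs p r'
    by unfold_locales (use monoidal products category ofs monoid factorizations E_tensor E_canon E_prod
      phi rs fact_phi in blast)+
  have sru_iso: "iso C (sru C j q0 bx qq r'')" if "sobj C M T r''" for r''
    using slice_mon that unfolding slice_monoidal_def by blast
  show ?thesis
    unfolding \<psi>_def
  proof (intro conjI allI impI)
    fix r'' \<psi>' assume "sobj C M T r'' \<and> alg_op_TM C M T bx qq rs r'' \<psi>' \<and> grades_TM C M T bx rs r'' \<psi>' \<phi>"
    then show "\<exists>!f. smor C f r' r''
        \<and> (\<forall>s. sobj C M T s \<longrightarrow> boxmap C bx qq r' s r'' s f (ida (dm s)) \<cdot> psi s = \<psi>' s)"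
      using psi_universal sru_iso by blast
  qed (use psi_char_ex1 psi_alg_op psi_grades psi_in_E in blast)+
qed

end
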